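(* Assume [H1]. Then the value function $u$ is continuous on $\mathcal G\times[0,T)$ (with respect to the geodesic distance on $\mathcal G$).
   Context: Let $N\ge 2$, $d\ge 1$, and let $e_1,\dots,e_N\in\mathbb R^d$ be pairwise distinct unit vectors. Let $J_i=\{s e_i: s\ge 0\}$, $\mathcal G=\bigcup_{i=1}^N J_i$ and $O=0$, with geodesic distance $d(x,y)=|x-y|$ if $x,y$ lie in a common $J_i$ and $d(x,y)=|x|+|y|$ otherwise. Fix $T>0$. For $i=0,\dots,N$ let $A_i=\{i\}\times\mathbb R$, $A=\bigcup_{i=0}^N A_i$ (disjoint union); for $a=(i,\bar a)$ write $|a|=|\bar a|$. Let $M=\{(x,a): x\in\mathcal G,\ a\in A_i \text{ if } x\in J_i\setminus\{O\},\ a\in A \text{ if } x=O\}$ and $f:M\to\mathbb R^d$, $f(x,(i,\bar a))=\bar a e_i$ for $i\ge 1$, $f(O,(0,\bar a))=0$. For $0\le t<T$ and $x\in\mathcal G$, $\Gamma_t[x]$ is the set of pairs $(y,\alpha)$ with $y\in W^{1,2}([t,T];\mathcal G)$, $\alpha:[t,T]\to A$ measurable, $(y(s),\alpha(s))\in M$ a.e., $\int|\alpha|^2<\infty$, and $y(s)=x+\int_t^s f(y(\tau),\alpha(\tau))\,d\tau$. [H1]: for $i=1,\dots,N$, $\ell_i:J_i\times[0,T]\to\mathbb R$ and $g_i:J_i\to\mathbb R$ continuous and bounded; $\ell_*:[0,T]\to\mathbb R$ continuous and bounded; $g_*\in\mathbb R$. $\ell_O(t)=\min\{\ell_*(t),\min_i\ell_i(O,t)\}$;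 $L(x,t)=\ell_i(x,t)$ for $x\in J_i\setminus\{O\}$, $L(O,t)=\ell_O(t)$; $g=g_i$ on $J_i\setminus\{O\}$, $g(O)=\min\{g_*,\min_i g_i(O)\}$. $J_t(x;(y,\alpha))=\int_t^T\big(L(y(\tau),\tau)+\tfrac12|\alpha(\tau)|^2\big)d\tau+g(y(T))$ and $u(x,t)=\inf_{(y,\alpha)\in\Gamma_t[x]}J_t(x;(y,\alpha))$. *)

theory Defs
  imports "HOL-Analysis.Analysis"
begin

text \<open>Edges are indexed by 1..N; the unit vectors are e 1, ..., e N.
  A control a = (i, abar) :: nat \<times> real lies in A_i; A = {0..N} \<times> real.\<close>

definition J_edge :: "'a::real_normed_vector \<Rightarrow> 'a set" where
  "J_edge v = {s *\<^sub>R v | s. s \<ge> 0}"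

definition Graph :: "nat \<Rightarrow> (nat \<Rightarrow> 'a::real_normed_vector) \<Rightarrow> 'a set" where
  "Graph N e = (\<Union>i\<in>{1..N}. J_edge (e i))"

definition gdist :: "nat \<Rightarrow> (nat \<Rightarrow> 'a::real_normed_vector) \<Rightarrow> 'a \<Rightarrow> 'a \<Rightarrow> real" where
  "gdist N e x y =
     (if \<exists>i\<in>{1..N}. x \<in> J_edge (e i) \<and> y \<in> J_edge (e i) then norm (x - y) else norm x + norm y)"

definition inM :: "nat \<Rightarrow> (nat \<Rightarrow> 'a::real_normed_vector) \<Rightarrow> 'a \<Rightarrow> nat \<times> real \<Rightarrow> bool" where
  "inM N e x a = (fst a \<le> N \<and> (x \<noteq> 0 \<longrightarrow> 1 \<le> fst a \<and> x \<in> J_edge (e (fst a))))"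

text \<open>dynamics f(x,(i,abar)) = abar e_i for i \<ge> 1, and 0 for i = 0 (only used at O)\<close>
definition fdyn :: "(nat \<Rightarrow> 'a::real_normed_vector) \<Rightarrow> nat \<times> real \<Rightarrow> 'a" where
  "fdyn e a = (if fst a = 0 then 0 else snd a *\<^sub>R e (fst a))"

definition admissible ::
  "nat \<Rightarrow> (nat \<Rightarrow> 'a::euclidean_space) \<Rightarrow> real \<Rightarrow> real \<Rightarrow> 'a \<Rightarrow> (real \<Rightarrow> 'a) \<Rightarrow> (real \<Rightarrow> nat \<times> real) \<Rightarrow> bool" where
  "admissible N e T t x y \<alpha> =
     ((\<forall>s\<in>{t..T}. y s \<in> Graph N e)
      \<and> (\<lambda>s. real (fst (\<alpha> s))) \<in> borel_measurable (lebesgue_on {t..T})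
      \<and> (\<lambda>s. snd (\<alpha> s)) \<in> borel_measurable (lebesgue_on {t..T})
      \<and> (AE s in lebesgue_on {t..T}. inM N e (y s) (\<alpha> s))
      \<and> (\<lambda>s. (snd (\<alpha> s))\<^sup>2) integrable_on {t..T}
      \<and> (\<lambda>s. fdyn e (\<alpha> s)) integrable_on {t..T}
      \<and> (\<forall>s\<in>{t..T}. y s = x + integral {t..s} (\<lambda>\<tau>. fdyn e (\<alpha> \<tau>))))"

definition ellO :: "nat \<Rightarrow> (nat \<Rightarrow> 'a::real_normed_vector \<Rightarrow> real \<Rightarrow> real) \<Rightarrow> (real \<Rightarrow> real) \<Rightarrow> real \<Rightarrow> real" where
  "ellO N l ls t = min (ls t) (Min {l i 0 t | i. i \<in> {1..N}})"

definition gO :: "nat \<Rightarrow> (nat \<Rightarrow> 'a::real_normed_vector \<Rightarrow> real) \<Rightarrow> real \<Rightarrow> real" where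
  "gO N g gs = min gs (Min {g i 0 | i. i \<in> {1..N}})"

definition edge_index :: "nat \<Rightarrow> (nat \<Rightarrow> 'a::real_normed_vector) \<Rightarrow> 'a \<Rightarrow> nat" where
  "edge_index N e x = (THE i. i \<in> {1..N} \<and> x \<in> J_edge (e i))"

definition Lrun :: "nat \<Rightarrow> (nat \<Rightarrow> 'a::real_normed_vector) \<Rightarrow> (nat \<Rightarrow> 'a \<Rightarrow> real \<Rightarrow> real) \<Rightarrow> (real \<Rightarrow> real)
    \<Rightarrow> 'a \<Rightarrow> real \<Rightarrow> real" where
  "Lrun N e l ls x t = (if x = 0 then ellO N l ls t else l (edge_index N e x) x t)"

definition gfin :: "nat \<Rightarrow> (nat \<Rightarrow> 'a::real_normed_vector) \<Rightarrow> (nat \<Rightarrow> 'a \<Rightarrow> real) \<Rightarrow> real \<Rightarrow> 'a \<Rightarrow> real" where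
  "gfin N e g gs x = (if x = 0 then gO N g gs else g (edge_index N e x) x)"

definition cost ::
  "nat \<Rightarrow> (nat \<Rightarrow> 'a::euclidean_space) \<Rightarrow> (nat \<Rightarrow> 'a \<Rightarrow> real \<Rightarrow> real) \<Rightarrow> (real \<Rightarrow> real)
   \<Rightarrow> (nat \<Rightarrow> 'a \<Rightarrow> real) \<Rightarrow> real \<Rightarrow> real \<Rightarrow> real \<Rightarrow> (real \<Rightarrow> 'a) \<Rightarrow> (real \<Rightarrow> nat \<times> real) \<Rightarrow> real" where
  "cost N e l ls g gs T t y \<alpha> =
     integral {t..T} (\<lambda>\<tau>. Lrun N e l ls (y \<tau>) \<tau> + (snd (\<alpha> \<tau>))\<^sup>2 / 2) + gfin N e g gs (y T)"

definition value_fun ::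
  "nat \<Rightarrow> (nat \<Rightarrow> 'a::euclidean_space) \<Rightarrow> (nat \<Rightarrow> 'a \<Rightarrow> real \<Rightarrow> real) \<Rightarrow> (real \<Rightarrow> real)
   \<Rightarrow> (nat \<Rightarrow> 'a \<Rightarrow> real) \<Rightarrow> real \<Rightarrow> real \<Rightarrow> 'a \<Rightarrow> real \<Rightarrow> real" where
  "value_fun N e l ls g gs T x t =
     Inf {cost N e l ls g gs T t y \<alpha> | y \<alpha>. admissible N e T t x y \<alpha>}"

end

theory Submission
  imports Defs
begin

text \<open>Costs are bounded below in terms of the energy of the control, so the value function
  is finite and \<open>\<epsilon>\<close>-optimal controls from any point have uniformly bounded energy,
  hence trajectories that stay in a bounded set.
  To compare \<open>u(x\<^sub>2, t\<^sub>2)\<close> with \<open>u(x\<^sub>1, t\<^sub>1)\<close>, start at \<open>x\<^sub>2\<close>, travel to \<open>x\<^sub>1\<close> along a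
  geodesic of the star graph during a time \<open>h\<close> (cost \<open>O(h + d\<^sup>2/h)\<close>, \<open>d\<close> the geodesic distance),
  and then run an \<open>\<epsilon>\<close>-optimal control for \<open>(x\<^sub>1, t\<^sub>1)\<close> reparametrised linearly onto the
  remaining time interval. The reparametrisation changes the running cost by \<open>O(h)\<close>, using
  the bounded energy and the uniform continuity in time of the running cost on bounded sets,
  and leaves the endpoint unchanged, so the terminal cost needs no continuity. Choosing \<open>h\<close>
  small and then \<open>d\<close> small gives \<open>u(x\<^sub>2, t\<^sub>2) \<le> u(x\<^sub>1, t\<^sub>1) + \<epsilon>\<close>; the roles are symmetric.\<close>

section \<open>Measure, integration and continuity on intervals\<close>

lemma AE_lebesgue_on_iff_negligible:
  fixes S :: "'a::euclidean_space set"
  assumes S: "S \<in> sets lebesgue"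
  shows "(AE x in lebesgue_on S. P x) \<longleftrightarrow> (\<exists>Z. negligible Z \<and> (\<forall>x\<in>S - Z. P x))"
proof -
  have "(AE x in lebesgue_on S. P x) \<longleftrightarrow> (AE x in lebesgue. x \<in> S \<longrightarrow> P x)"
    using S by (subst AE_restrict_space_iff) auto
  also have "\<dots> \<longleftrightarrow> (\<exists>Z. negligible Z \<and> (\<forall>x\<in>S - Z. P x))"
  proof
    assume "AE x in lebesgue. x \<in> S \<longrightarrow> P x"
    then obtain Z where Z: "{x \<in> space lebesgue. \<not> (x \<in> S \<longrightarrow> P x)} \<subseteq> Z"
      "emeasure lebesgue Z = 0" "Z \<in> sets lebesgue"
      by (rule AE_E)
    then have "negligible Z" using negligible_iff_null_sets null_setsI by blast
    with Z(1) show "\<exists>Z. negligible Z \<and> (\<forall>x\<in>S - Z. P x)" by auto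
  next
    assume "\<exists>Z. negligible Z \<and> (\<forall>x\<in>S - Z. P x)"
    then obtain Z where "negligible Z" "\<forall>x\<in>S - Z. P x" by blast
    then show "AE x in lebesgue. x \<in> S \<longrightarrow> P x"
      by (intro AE_I'[of Z]) (auto simp: negligible_iff_null_sets)
  qed
  finally show ?thesis .
qed

lemma AE_lebesgue_on_interval_iff_negligible:
  "(AE s in lebesgue_on {p..q::real}. P s) \<longleftrightarrow> (\<exists>Z. negligible Z \<and> (\<forall>s\<in>{p..q} - Z. P s))"
  by (rule AE_lebesgue_on_iff_negligible) simp

lemma negligible_affine_vimage:
  fixes c k :: real
  assumes "k \<noteq> 0" "negligible Z"
  shows "negligible {s. c + k * s \<in> Z}"
proof -
  define \<psi> where "\<psi> = (\<lambda>x::real. (x - c) / k)"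
  have "negligible (\<psi> ` Z)"
  proof (rule negligible_locally_Lipschitz_image[OF _ assms(2)])
    fix x assume "x \<in> Z"
    show "\<exists>T B. open T \<and> x \<in> T \<and> (\<forall>y\<in>Z \<inter> T. norm (\<psi> y - \<psi> x) \<le> B * norm (y - x))"
    proof (intro exI[of _ UNIV] exI[of _ "1 / \<bar>k\<bar>"] conjI ballI)
      fix y assume "y \<in> Z \<inter> UNIV"
      have "\<psi> y - \<psi> x = (y - x) / k" unfolding \<psi>_def using assms(1) by (simp add: field_simps)
      then show "norm (\<psi> y - \<psi> x) \<le> 1 / \<bar>k\<bar> * norm (y - x)" by (simp add: abs_div)
    qed auto
  qed auto
  moreover have "{s. c + k * s \<in> Z} \<subseteq> \<psi> ` Z"
  proof
    fix s assume "s \<in> {s. c + k * s \<in> Z}"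
    moreover have "s = \<psi> (c + k * s)" unfolding \<psi>_def using assms(1) by simp
    ultimately show "s \<in> \<psi> ` Z" by blast
  qed
  ultimately show ?thesis using negligible_subset by blast
qed

lemma borel_measurable_lebesgue_on_piecewise:
  fixes f1 f2 :: "real \<Rightarrow> real"
  assumes "f1 \<in> borel_measurable (lebesgue_on {p..q})" "f2 \<in> borel_measurable (lebesgue_on {q..r})"
    "p \<le> q" "q \<le> r"
  shows "(\<lambda>s. if s \<le> q then f1 s else f2 s) \<in> borel_measurable (lebesgue_on {p..r})"
proof -
  have f2': "f2 \<in> borel_measurable (lebesgue_on {q<..r})"
    by (rule measurable_restrict_mono[OF assms(2)]) auto
  have F1: "(\<lambda>s. if s \<in> {p..q} then f1 s else 0) \<in> borel_measurable lebesgue"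
    using assms(1) by (intro borel_measurable_if_I) auto
  have F2: "(\<lambda>s. if s \<in> {q<..r} then f2 s else 0) \<in> borel_measurable lebesgue"
    using f2' by (intro borel_measurable_if_I) auto
  have "(\<lambda>s. (if s \<in> {p..q} then f1 s else 0) + (if s \<in> {q<..r} then f2 s else 0))
      \<in> borel_measurable lebesgue"
    using F1 F2 by (rule borel_measurable_add)
  moreover have "(\<lambda>s. (if s \<in> {p..q} then f1 s else 0) + (if s \<in> {q<..r} then f2 s else 0))
      = (\<lambda>s. if s \<in> {p..r} then (if s \<le> q then f1 s else f2 s) else 0)"
    using assms(3,4) by (auto simp: fun_eq_iff)
  ultimately show ?thesis by (intro borel_measurable_if_D) simp
qed

lemma borel_measurable_lebesgue_on_affine_comp:
  fixes f :: "real \<Rightarrow> real" and c k :: real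
  assumes f: "f \<in> borel_measurable (lebesgue_on {a..b})" and k: "k > 0"
  shows "(\<lambda>s. f (c + k * s)) \<in> borel_measurable (lebesgue_on {(a - c) / k..(b - c) / k})"
proof -
  have F: "(\<lambda>s. if s \<in> {a..b} then f s else 0) \<in> borel_measurable lebesgue"
    using f by (intro borel_measurable_if_I) auto
  have affine: "(\<lambda>x::real. c + k * x) \<in> lebesgue \<rightarrow>\<^sub>M lebesgue"
    using lebesgue_affine_measurable[where c="\<lambda>_. k" and t=c] k by simp
  have "(\<lambda>s. if c + k * s \<in> {a..b} then f (c + k * s) else 0) \<in> borel_measurable lebesgue"
    using measurable_compose[OF affine F] by (simp add: o_def)
  moreover have "\<And>s. (c + k * s \<in> {a..b}) = (s \<in> {(a - c) / k..(b - c) / k})"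
    using k by (auto simp: field_simps)
  ultimately show ?thesis by (intro borel_measurable_if_D) simp
qed

lemma borel_measurable_if_vimage:
  fixes y :: "'b \<Rightarrow> 'a::topological_space" and f :: "'b \<Rightarrow> real"
  assumes "y \<in> borel_measurable M" "S \<in> sets borel" "f \<in> borel_measurable M"
  shows "(\<lambda>\<tau>. if y \<tau> \<in> S then f \<tau> else 0) \<in> borel_measurable M"
proof (rule measurable_If[OF assms(3)])
  show "(\<lambda>x. 0) \<in> borel_measurable M" by simp
  have "{x \<in> space M. y x \<in> S} = y -` S \<inter> space M" by auto
  then show "{x \<in> space M. y x \<in> S} \<in> sets M" using measurable_sets[OF assms(1,2)] by simp
qed

lemma integrable_on_piecewise:
  fixes f1 f2 :: "real \<Rightarrow> 'b::banach"
  assumes "f1 integrable_on {p..q}" "f2 integrable_on {q..r}" "p \<le> q" "q \<le> r"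
  shows "(\<lambda>s. if s \<le> q then f1 s else f2 s) integrable_on {p..r}"
proof (rule Henstock_Kurzweil_Integration.integrable_combine[OF assms(3,4)])
  show "(\<lambda>s. if s \<le> q then f1 s else f2 s) integrable_on {p..q}"
    by (rule integrable_eq[OF assms(1)]) auto
  show "(\<lambda>s. if s \<le> q then f1 s else f2 s) integrable_on {q..r}"
    by (rule integrable_spike_finite[of "{q}" _ _ f2]) (use assms(2) in auto)
qed

lemma integral_piecewise:
  fixes f1 f2 :: "real \<Rightarrow> 'b::banach"
  assumes "f1 integrable_on {p..q}" "f2 integrable_on {q..r}" "p \<le> q" "q \<le> r"
  shows "integral {p..r} (\<lambda>s. if s \<le> q then f1 s else f2 s) = integral {p..q} f1 + integral {q..r} f2"
proof -
  let ?f = "\<lambda>s. if s \<le> q then f1 s else f2 s"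
  have "integral {p..r} ?f = integral {p..q} ?f + integral {q..r} ?f"
    using integrable_on_piecewise[OF assms] assms(3,4)
    by (simp add: Henstock_Kurzweil_Integration.integral_combine)
  moreover have "integral {p..q} ?f = integral {p..q} f1" by (rule integral_cong) auto
  moreover have "integral {q..r} ?f = integral {q..r} f2"
    by (rule integral_spike[of "{q}"]) auto
  ultimately show ?thesis by simp
qed

lemma has_integral_affine_comp:
  fixes f :: "real \<Rightarrow> 'b::banach" and c k :: real
  assumes "(f has_integral I) {a..b}" "k > 0"
  shows "((\<lambda>s. f (c + k * s)) has_integral (I /\<^sub>R k)) {(a - c) / k..(b - c) / k}"
proof -
  have "((\<lambda>x. f (k *\<^sub>R x + c)) has_integral (I /\<^sub>R k ^ DIM(real)))
      (cbox ((a - c) /\<^sub>R k) ((b - c) /\<^sub>R k))"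
    using assms by (intro has_integral_affinity') (auto simp: cbox_interval)
  then show ?thesis by (simp add: cbox_interval add.commute divide_inverse_commute)
qed

lemma integrable_on_affine_comp:
  fixes f :: "real \<Rightarrow> 'b::banach" and c k :: real
  assumes "f integrable_on {a..b}" "k > 0"
  shows "(\<lambda>s. f (c + k * s)) integrable_on {(a - c) / k..(b - c) / k}"
    and "integral {(a - c) / k..(b - c) / k} (\<lambda>s. f (c + k * s)) = integral {a..b} f /\<^sub>R k"
  using has_integral_affine_comp[OF integrable_integral[OF assms(1)] assms(2), of c]
  by (auto simp: integrable_on_def integral_unique)

lemma continuous_on_Min_family:
  fixes f :: "'i \<Rightarrow> 'b::topological_space \<Rightarrow> 'c::linorder_topology"
  assumes "finite I" "I \<noteq> {}" "\<And>i. i \<in> I \<Longrightarrow> continuous_on S (f i)"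
  shows "continuous_on S (\<lambda>t. Min {f i t | i. i \<in> I})"
  using assms
proof (induction I rule: finite_ne_induct)
  case (singleton x)
  then show ?case by simp
next
  case (insert x F)
  have "{f i t | i. i \<in> insert x F} = insert (f x t) {f i t | i. i \<in> F}" for t by auto
  moreover have "Min (insert (f x t) {f i t | i. i \<in> F}) = min (f x t) (Min {f i t | i. i \<in> F})" for t
    using insert(1,2) by (intro Min_insert) auto
  moreover have "continuous_on S (\<lambda>t. min (f x t) (Min {f i t | i. i \<in> F}))"
    using insert by (intro continuous_on_min) auto
  ultimately show ?case by simp
qed

lemma abs_le_half_one_plus_square: "\<bar>a::real\<bar> \<le> (1 + a\<^sup>2) / 2"
proof -
  have "0 \<le> (\<bar>a\<bar> - 1)\<^sup>2" by simp
  then show ?thesis by (simp add: power2_eq_square algebra_simps)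
qed

lemma uniform_continuity_in_time:
  fixes f :: "'a::metric_space \<Rightarrow> real \<Rightarrow> real"
  assumes K: "compact K" and f: "continuous_on (K \<times> {a..b}) (\<lambda>(x, t). f x t)" and \<epsilon>: "\<epsilon> > 0"
  shows "\<exists>d>0. \<forall>z\<in>K. \<forall>s1\<in>{a..b}. \<forall>s2\<in>{a..b}. \<bar>s1 - s2\<bar> < d \<longrightarrow> \<bar>f z s1 - f z s2\<bar> \<le> \<epsilon>"
proof -
  have "uniformly_continuous_on (K \<times> {a..b}) (\<lambda>(x, t). f x t)"
    using K by (intro compact_uniformly_continuous[OF f] compact_Times) auto
  then obtain d where d: "d > 0" and close: "\<forall>x\<in>K \<times> {a..b}. \<forall>x'\<in>K \<times> {a..b}.
      dist x' x < d \<longrightarrow> dist ((\<lambda>(x, t). f x t) x') ((\<lambda>(x, t). f x t) x) < \<epsilon>"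
    unfolding uniformly_continuous_on_def using \<epsilon> by blast
  have "\<bar>f z s1 - f z s2\<bar> \<le> \<epsilon>"
    if "z \<in> K" "s1 \<in> {a..b}" "s2 \<in> {a..b}" "\<bar>s1 - s2\<bar> < d" for z s1 s2
    using close[rule_format, of "(z, s2)" "(z, s1)"] that
    by (simp add: dist_Pair_Pair dist_real_def)
  with d show ?thesis by blast
qed

lemma rescaled_time_mem:
  fixes t1 q T \<tau> :: real
  assumes "t1 \<le> T" "q < T" "\<tau> \<in> {q..T}"
  shows "t1 + (T - t1) / (T - q) * (\<tau> - q) \<in> {t1..T}"
proof -
  have "(T - t1) / (T - q) * (\<tau> - q) \<le> (T - t1) / (T - q) * (T - q)"
    using assms by (intro mult_left_mono) auto
  then show ?thesis using assms by auto
qed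

lemma rescaled_time_dist_le:
  fixes t1 q T \<tau> :: real
  assumes "q < T" "\<tau> \<in> {q..T}"
  shows "\<bar>t1 + (T - t1) / (T - q) * (\<tau> - q) - \<tau>\<bar> \<le> \<bar>t1 - q\<bar>"
proof -
  have "t1 + (T - t1) / (T - q) * (\<tau> - q) - \<tau> = (t1 - q) * ((T - \<tau>) / (T - q))"
    using assms by (simp add: field_simps)
  moreover have ratio: "0 \<le> (T - \<tau>) / (T - q)" "(T - \<tau>) / (T - q) \<le> 1" using assms by auto
  ultimately have "\<bar>t1 + (T - t1) / (T - q) * (\<tau> - q) - \<tau>\<bar> = \<bar>t1 - q\<bar> * ((T - \<tau>) / (T - q))"
    by (simp only: abs_mult abs_of_nonneg)
  also have "\<dots> \<le> \<bar>t1 - q\<bar>" by (rule mult_left_le) (use ratio in auto)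
  finally show ?thesis .
qed

lemma rescaling_excess_le:
  fixes A E E0 C T t1 q h \<eta> :: real
  assumes A: "\<bar>A\<bar> \<le> C" and E: "0 \<le> E" "E \<le> E0" and close: "\<bar>t1 - q\<bar> \<le> 2 * h"
    and \<eta>: "0 < \<eta>" "\<eta> \<le> T - t1" "\<eta> / 2 \<le> T - q"
  defines "k \<equiv> (T - t1) / (T - q)"
  shows "A / k + k * (E / 2) \<le> A + E / 2 + 2 * h * (C + E0) / \<eta>"
proof -
  have "1 / k - 1 = (t1 - q) / (T - t1)" "k - 1 = (q - t1) / (T - q)"
    unfolding k_def using \<eta> by (simp_all add: field_simps)
  moreover have "\<bar>t1 - q\<bar> / (T - t1) \<le> 2 * h / \<eta>"
    by (rule frac_le) (use close \<eta> in auto)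
  moreover have "\<bar>q - t1\<bar> / (T - q) \<le> 2 * h / (\<eta> / 2)"
    by (rule frac_le) (use close \<eta> in \<open>auto simp: abs_minus_commute\<close>)
  ultimately have k1: "\<bar>1 / k - 1\<bar> \<le> 2 * h / \<eta>" and k2: "\<bar>k - 1\<bar> \<le> 4 * h / \<eta>"
    using \<eta> by (simp_all add: abs_div)
  have "A * (1 / k - 1) \<le> \<bar>A\<bar> * \<bar>1 / k - 1\<bar>" by (metis abs_ge_self abs_mult)
  also have "\<dots> \<le> C * (2 * h / \<eta>)" using A k1 by (intro mult_mono) auto
  finally have "A * (1 / k - 1) \<le> C * (2 * h / \<eta>)" .
  moreover have "(k - 1) * (E / 2) \<le> (4 * h / \<eta>) * (E0 / 2)"
    using k2 E by (intro mult_mono) auto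
  moreover have "A / k + k * (E / 2) = A + E / 2 + A * (1 / k - 1) + (k - 1) * (E / 2)"
  proof -
    have "k \<noteq> 0" unfolding k_def using \<eta> by simp
    then show ?thesis by (simp add: field_simps)
  qed
  moreover have "C * (2 * h / \<eta>) + (4 * h / \<eta>) * (E0 / 2) = 2 * h * (C + E0) / \<eta>"
    using \<eta>(1) by (simp add: field_simps)
  ultimately show ?thesis by linarith
qed

section \<open>The star graph and its admissible trajectories\<close>

lemma mem_J_edge_iff: "z \<in> J_edge v \<longleftrightarrow> (\<exists>s\<ge>0. z = s *\<^sub>R v)"
  unfolding J_edge_def by blast

lemma zero_in_J_edge [simp]: "0 \<in> J_edge v"
  unfolding mem_J_edge_iff by (rule exI[of _ 0]) simp

lemma scaleR_in_J_edge: "s \<ge> 0 \<Longrightarrow> s *\<^sub>R v \<in> J_edge v"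
  unfolding mem_J_edge_iff by blast

lemma J_edge_eq_image: "J_edge v = (\<lambda>s. s *\<^sub>R v) ` {0..}"
  unfolding J_edge_def by auto

lemma closed_J_edge: "closed (J_edge (v::'a::euclidean_space))"
proof (cases "v = 0")
  case True
  then show ?thesis by (simp add: J_edge_eq_image image_constant_conv)
next
  case False
  have "linear (\<lambda>s::real. s *\<^sub>R v)" by (simp add: linearI scaleR_add_left)
  moreover have "inj (\<lambda>s::real. s *\<^sub>R v)" using False by (auto simp: inj_def)
  ultimately show ?thesis
    unfolding J_edge_eq_image by (rule closed_injective_linear_image[OF closed_atLeast])
qed

lemma convex_J_edge: "convex (J_edge v)"
  unfolding J_edge_eq_image
  by (rule convex_linear_image) (auto simp: linearI scaleR_add_left)

definition edge_proj :: "'a::real_inner \<Rightarrow> 'a \<Rightarrow> 'a" where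
  "edge_proj v z = max 0 (z \<bullet> v) *\<^sub>R v"

lemma edge_proj_in_J_edge: "edge_proj v z \<in> J_edge v"
  unfolding edge_proj_def by (rule scaleR_in_J_edge) simp

lemma continuous_on_edge_proj: "continuous_on S (edge_proj v)"
  unfolding edge_proj_def[abs_def] by (intro continuous_intros)

locale star_graph =
  fixes N :: nat and e :: "nat \<Rightarrow> 'a::euclidean_space"
  assumes N_pos: "0 < N"
    and norm_edge: "\<And>i. i \<in> {1..N} \<Longrightarrow> norm (e i) = 1"
    and inj_edge: "inj_on e {1..N}"
begin

abbreviation "G \<equiv> Graph N e"

lemma J_edge_eq_norm_scaleR:
  assumes "i \<in> {1..N}" "z \<in> J_edge (e i)"
  shows "z = norm z *\<^sub>R e i"
proof -
  obtain s where "s \<ge> 0" "z = s *\<^sub>R e i" using assms(2) mem_J_edge_iff by blast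
  moreover have "norm z = s" using calculation norm_edge[OF assms(1)] by simp
  ultimately show ?thesis by simp
qed

lemma J_edge_index_unique:
  assumes "i \<in> {1..N}" "j \<in> {1..N}" "z \<in> J_edge (e i)" "z \<in> J_edge (e j)" "z \<noteq> 0"
  shows "i = j"
proof -
  have "norm z *\<^sub>R e i = norm z *\<^sub>R e j"
    using J_edge_eq_norm_scaleR assms by (metis (no_types))
  then have "e i = e j" using assms(5) by simp
  then show ?thesis using inj_edge assms(1,2) by (meson inj_onD)
qed

lemma edge_index_eqI:
  assumes "i \<in> {1..N}" "z \<in> J_edge (e i)" "z \<noteq> 0"
  shows "edge_index N e z = i"
  unfolding edge_index_def
  by (rule the_equality) (use assms J_edge_index_unique in blast)+

lemma mem_Graph_iff: "z \<in> G \<longleftrightarrow> (\<exists>i\<in>{1..N}. z \<in> J_edge (e i))"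
  unfolding Graph_def by blast

lemma zero_in_Graph [simp]: "0 \<in> G"
  using N_pos unfolding mem_Graph_iff by (intro bexI[of _ 1]) auto

lemma J_edge_subset_Graph: "i \<in> {1..N} \<Longrightarrow> J_edge (e i) \<subseteq> G"
  using mem_Graph_iff by blast

lemma edge_proj_eq:
  assumes "i \<in> {1..N}" "z \<in> J_edge (e i)"
  shows "edge_proj (e i) z = z"
proof -
  have z: "z = norm z *\<^sub>R e i" using J_edge_eq_norm_scaleR assms by blast
  have "e i \<bullet> e i = 1" using norm_edge[OF assms(1)] by (simp add: dot_square_norm)
  then have "z \<bullet> e i = norm z" by (subst z) simp
  then show ?thesis unfolding edge_proj_def using z by simp
qed

lemma norm_diff_le_gdist: "norm (x - y) \<le> gdist N e x y"
  unfolding gdist_def by (auto simp: norm_triangle_ineq4)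

lemma gdist_commute: "gdist N e x y = gdist N e y x"
  unfolding gdist_def by (auto simp: norm_minus_commute)

lemma admissibleD:
  assumes "admissible N e q p x y \<alpha>"
  shows "\<forall>s\<in>{p..q}. y s \<in> G"
    and "(\<lambda>s. real (fst (\<alpha> s))) \<in> borel_measurable (lebesgue_on {p..q})"
    and "(\<lambda>s. snd (\<alpha> s)) \<in> borel_measurable (lebesgue_on {p..q})"
    and "AE s in lebesgue_on {p..q}. inM N e (y s) (\<alpha> s)"
    and "(\<lambda>s. (snd (\<alpha> s))\<^sup>2) integrable_on {p..q}"
    and "(\<lambda>s. fdyn e (\<alpha> s)) integrable_on {p..q}"
    and "\<forall>s\<in>{p..q}. y s = x + integral {p..s} (\<lambda>\<tau>. fdyn e (\<alpha> \<tau>))"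
  using assms unfolding admissible_def by blast+

lemma admissible_concat:
  assumes A1: "admissible N e q p a y1 \<alpha>1" and A2: "admissible N e r q (y1 q) y2 \<alpha>2"
    and pq: "p \<le> q" and qr: "q \<le> r"
  shows "admissible N e r p a (\<lambda>s. if s \<le> q then y1 s else y2 s)
           (\<lambda>s. if s \<le> q then \<alpha>1 s else \<alpha>2 s)"
proof -
  let ?y = "\<lambda>s. if s \<le> q then y1 s else y2 s"
  let ?\<alpha> = "\<lambda>s. if s \<le> q then \<alpha>1 s else \<alpha>2 s"
  note a1 = admissibleD[OF A1] and a2 = admissibleD[OF A2]
  have "(\<lambda>s. if s \<le> q then real (fst (\<alpha>1 s)) else real (fst (\<alpha>2 s)))
      \<in> borel_measurable (lebesgue_on {p..r})"
    using a1(2) a2(2) pq qr by (rule borel_measurable_lebesgue_on_piecewise)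
  then have fst_meas: "(\<lambda>s. real (fst (?\<alpha> s))) \<in> borel_measurable (lebesgue_on {p..r})"
    by (simp add: if_distrib)
  have "(\<lambda>s. if s \<le> q then snd (\<alpha>1 s) else snd (\<alpha>2 s)) \<in> borel_measurable (lebesgue_on {p..r})"
    using a1(3) a2(3) pq qr by (rule borel_measurable_lebesgue_on_piecewise)
  then have snd_meas: "(\<lambda>s. snd (?\<alpha> s)) \<in> borel_measurable (lebesgue_on {p..r})"
    by (simp add: if_distrib)
  obtain Z1 where Z1: "negligible Z1" "\<forall>s\<in>{p..q} - Z1. inM N e (y1 s) (\<alpha>1 s)"
    using a1(4) AE_lebesgue_on_interval_iff_negligible by blast
  obtain Z2 where Z2: "negligible Z2" "\<forall>s\<in>{q..r} - Z2. inM N e (y2 s) (\<alpha>2 s)"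
    using a2(4) AE_lebesgue_on_interval_iff_negligible by blast
  have inM: "AE s in lebesgue_on {p..r}. inM N e (?y s) (?\<alpha> s)"
    unfolding AE_lebesgue_on_interval_iff_negligible
    by (rule exI[of _ "Z1 \<union> Z2"]) (use Z1 Z2 in auto)
  have "(\<lambda>s. if s \<le> q then (snd (\<alpha>1 s))\<^sup>2 else (snd (\<alpha>2 s))\<^sup>2) integrable_on {p..r}"
    using a1(5) a2(5) pq qr by (rule integrable_on_piecewise)
  then have energy: "(\<lambda>s. (snd (?\<alpha> s))\<^sup>2) integrable_on {p..r}"
    by (rule integrable_eq) auto
  have fdyn_eq: "(\<lambda>s. fdyn e (?\<alpha> s)) = (\<lambda>s. if s \<le> q then fdyn e (\<alpha>1 s) else fdyn e (\<alpha>2 s))"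
    by auto
  have fdyn_int: "(\<lambda>s. fdyn e (?\<alpha> s)) integrable_on {p..r}"
    unfolding fdyn_eq using a1(6) a2(6) pq qr by (rule integrable_on_piecewise)
  have "?y s = a + integral {p..s} (\<lambda>\<tau>. fdyn e (?\<alpha> \<tau>))" if s: "s \<in> {p..r}" for s
  proof (cases "s \<le> q")
    case True
    have "integral {p..s} (\<lambda>\<tau>. fdyn e (?\<alpha> \<tau>)) = integral {p..s} (\<lambda>\<tau>. fdyn e (\<alpha>1 \<tau>))"
      by (rule integral_cong) (use True in auto)
    then show ?thesis using a1(7) s True by auto
  next
    case False
    have "integral {p..s} (\<lambda>\<tau>. fdyn e (?\<alpha> \<tau>)) =
        integral {p..q} (\<lambda>\<tau>. fdyn e (\<alpha>1 \<tau>)) + integral {q..s} (\<lambda>\<tau>. fdyn e (\<alpha>2 \<tau>))"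
      unfolding fdyn_eq using False s pq
      by (intro integral_piecewise a1(6) integrable_on_subinterval[OF a2(6)]) auto
    moreover have "y1 q = a + integral {p..q} (\<lambda>\<tau>. fdyn e (\<alpha>1 \<tau>))" using a1(7) pq by auto
    moreover have "y2 s = y1 q + integral {q..s} (\<lambda>\<tau>. fdyn e (\<alpha>2 \<tau>))" using a2(7) False s by auto
    ultimately show ?thesis using False by simp
  qed
  moreover have "\<forall>s\<in>{p..r}. ?y s \<in> G" using a1(1) a2(1) by auto
  ultimately show ?thesis
    unfolding admissible_def using fst_meas snd_meas inM energy fdyn_int by blast
qed

lemma admissible_segment:
  assumes i: "i \<in> {1..N}" and a: "a \<in> J_edge (e i)" and b: "b \<in> J_edge (e i)" and pq: "p < q"
  shows "admissible N e q p a (\<lambda>s. a + ((s - p) / (q - p)) *\<^sub>R (b - a))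
           (\<lambda>s. (i, (norm b - norm a) / (q - p)))"
proof -
  let ?v = "(norm b - norm a) / (q - p)"
  let ?y = "\<lambda>s. a + ((s - p) / (q - p)) *\<^sub>R (b - a)"
  have i0: "i \<noteq> 0" "i \<le> N" "1 \<le> i" using i by auto
  have ba: "b - a = (norm b - norm a) *\<^sub>R e i"
    using J_edge_eq_norm_scaleR[OF i a] J_edge_eq_norm_scaleR[OF i b]
    by (metis scaleR_left_diff_distrib)
  have on_edge: "?y s \<in> J_edge (e i)" if "s \<in> {p..q}" for s
  proof -
    have "?y s = (1 - (s - p) / (q - p)) *\<^sub>R a + ((s - p) / (q - p)) *\<^sub>R b"
      by (simp add: algebra_simps)
    moreover have "0 \<le> (s - p) / (q - p)" "(s - p) / (q - p) \<le> 1"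
      using that pq by (auto simp: divide_simps)
    ultimately show ?thesis using convexD[OF convex_J_edge a b] by simp
  qed
  have "integral {p..s} (\<lambda>\<tau>. fdyn e (i, ?v)) = ((s - p) / (q - p)) *\<^sub>R (b - a)"
    if "s \<in> {p..q}" for s
    using that pq unfolding ba fdyn_def by (auto simp: i0)
  then show ?thesis
    unfolding admissible_def using on_edge J_edge_subset_Graph[OF i] i0
    by (auto intro!: AE_I2 simp: inM_def)
qed

lemma admissible_stay:
  assumes "x \<in> G" "p < q"
  shows "\<exists>i. admissible N e q p x (\<lambda>s. x) (\<lambda>s. (i, 0))"
proof -
  obtain i where "i \<in> {1..N}" "x \<in> J_edge (e i)" using assms(1) mem_Graph_iff by blast
  from admissible_segment[OF this(1,2,2) assms(2)] show ?thesis by auto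
qed

lemma admissible_rescale:
  assumes A: "admissible N e T t1 x y \<alpha>" and t1: "t1 < T" and p: "p < T"
  defines "k \<equiv> (T - t1) / (T - p)"
  shows "admissible N e T p x (\<lambda>s. y (t1 + k * (s - p)))
           (\<lambda>s. (fst (\<alpha> (t1 + k * (s - p))), k * snd (\<alpha> (t1 + k * (s - p)))))"
proof -
  note a = admissibleD[OF A]
  define c where "c = t1 - k * p"
  have k: "k > 0" unfolding k_def using t1 p by simp
  have shift: "t1 + k * (s - p) = c + k * s" for s unfolding c_def by (simp add: algebra_simps)
  have lower: "(t1 - c) / k = p" unfolding c_def using k by simp
  have "k * (T - p) = T - t1" unfolding k_def using p by simp
  then have "T - c = k * T" unfolding c_def by (simp add: algebra_simps)
  then have upper: "(T - c) / k = T" using k by simp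
  have range: "c + k * s \<in> {t1..T}" if "s \<in> {p..T}" for s
  proof -
    have "c + k * s \<le> c + k * T" using that k by simp
    also have "c + k * T = T" using upper k by (simp add: field_simps)
    finally show ?thesis using that k unfolding c_def by (simp add: algebra_simps)
  qed
  let ?y = "\<lambda>s. y (c + k * s)"
  let ?\<alpha> = "\<lambda>s. (fst (\<alpha> (c + k * s)), k * snd (\<alpha> (c + k * s)))"
  have fst_meas: "(\<lambda>s. real (fst (?\<alpha> s))) \<in> borel_measurable (lebesgue_on {p..T})"
    using borel_measurable_lebesgue_on_affine_comp[OF a(2) k, of c] unfolding lower upper by simp
  have "(\<lambda>s. snd (\<alpha> (c + k * s))) \<in> borel_measurable (lebesgue_on {p..T})"
    using borel_measurable_lebesgue_on_affine_comp[OF a(3) k, of c] unfolding lower upper .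
  then have snd_meas: "(\<lambda>s. snd (?\<alpha> s)) \<in> borel_measurable (lebesgue_on {p..T})"
    by simp
  obtain Z where Z: "negligible Z" "\<forall>s\<in>{t1..T} - Z. inM N e (y s) (\<alpha> s)"
    using a(4) AE_lebesgue_on_interval_iff_negligible by blast
  have inM: "AE s in lebesgue_on {p..T}. inM N e (?y s) (?\<alpha> s)"
    unfolding AE_lebesgue_on_interval_iff_negligible
  proof (intro exI[of _ "{s. c + k * s \<in> Z}"] conjI ballI)
    show "negligible {s. c + k * s \<in> Z}" using negligible_affine_vimage k Z(1) by simp
    fix s assume "s \<in> {p..T} - {s. c + k * s \<in> Z}"
    then have "inM N e (y (c + k * s)) (\<alpha> (c + k * s))" using Z(2) range by blast
    then show "inM N e (?y s) (?\<alpha> s)" unfolding inM_def by simp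
  qed
  have "(\<lambda>s. (snd (\<alpha> (c + k * s)))\<^sup>2) integrable_on {p..T}"
    using integrable_on_affine_comp(1)[OF a(5) k, of c] unfolding lower upper .
  then have "(\<lambda>s. k\<^sup>2 *\<^sub>R (snd (\<alpha> (c + k * s)))\<^sup>2) integrable_on {p..T}"
    by (rule integrable_cmul)
  then have energy: "(\<lambda>s. (snd (?\<alpha> s))\<^sup>2) integrable_on {p..T}"
    by (simp add: power_mult_distrib)
  have fdyn_eq: "fdyn e (?\<alpha> s) = k *\<^sub>R fdyn e (\<alpha> (c + k * s))" for s
    unfolding fdyn_def by simp
  have "(\<lambda>s. fdyn e (\<alpha> (c + k * s))) integrable_on {p..T}"
    using integrable_on_affine_comp(1)[OF a(6) k, of c] unfolding lower upper .
  then have fdyn_int: "(\<lambda>s. fdyn e (?\<alpha> s)) integrable_on {p..T}"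
    unfolding fdyn_eq by (rule integrable_cmul)
  have "?y s = x + integral {p..s} (\<lambda>\<tau>. fdyn e (?\<alpha> \<tau>))" if s: "s \<in> {p..T}" for s
  proof -
    have int: "(\<lambda>\<tau>. fdyn e (\<alpha> \<tau>)) integrable_on {t1..c + k * s}"
      by (rule integrable_on_subinterval[OF a(6)]) (use range[OF s] in auto)
    have "integral {p..s} (\<lambda>\<tau>. fdyn e (?\<alpha> \<tau>))
        = k *\<^sub>R integral {p..s} (\<lambda>\<tau>. fdyn e (\<alpha> (c + k * \<tau>)))"
      unfolding fdyn_eq by simp
    also have "integral {p..s} (\<lambda>\<tau>. fdyn e (\<alpha> (c + k * \<tau>)))
        = integral {t1..c + k * s} (\<lambda>\<tau>. fdyn e (\<alpha> \<tau>)) /\<^sub>R k"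
      using integrable_on_affine_comp(2)[OF int k, of c] k unfolding lower by simp
    finally show ?thesis using a(7) range[OF s] k by simp
  qed
  moreover have "\<forall>s\<in>{p..T}. ?y s \<in> G" using a(1) range by blast
  ultimately have "admissible N e T p x ?y ?\<alpha>"
    unfolding admissible_def using fst_meas snd_meas inM energy fdyn_int by blast
  then show ?thesis unfolding shift .
qed

lemma admissible_continuous_on:
  assumes "admissible N e q p x y \<alpha>"
  shows "continuous_on {p..q} y"
proof -
  note a = admissibleD[OF assms]
  have "continuous_on {p..q} (\<lambda>s. x + integral {p..s} (\<lambda>\<tau>. fdyn e (\<alpha> \<tau>)))"
    by (intro continuous_intros indefinite_integral_continuous_1 a(6))
  then show ?thesis by (rule continuous_on_eq) (use a(7) in auto)
qed

lemma admissible_norm_diff_le: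
  assumes A: "admissible N e q p x y \<alpha>" and s: "s \<in> {p..q}"
  shows "norm (y s - x) \<le> ((q - p) + integral {p..q} (\<lambda>\<tau>. (snd (\<alpha> \<tau>))\<^sup>2)) / 2"
proof -
  note a = admissibleD[OF A]
  obtain Z where Z: "negligible Z" "\<forall>s\<in>{p..q} - Z. inM N e (y s) (\<alpha> s)"
    using a(4) AE_lebesgue_on_interval_iff_negligible by blast
  define F where "F = (\<lambda>\<tau>. if \<tau> \<in> Z then 0 else fdyn e (\<alpha> \<tau>))"
  define h where "h = (\<lambda>\<tau>. (1 + (snd (\<alpha> \<tau>))\<^sup>2) / 2)"
  have sub: "{p..s} \<subseteq> {p..q}" using s by auto
  have F_eq: "integral {p..s} (\<lambda>\<tau>. fdyn e (\<alpha> \<tau>)) = integral {p..s} F"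
    by (rule integral_spike[OF Z(1)]) (auto simp: F_def)
  have F_int: "F integrable_on {p..s}"
    by (rule integrable_spike[OF integrable_on_subinterval[OF a(6) sub] Z(1)]) (auto simp: F_def)
  have energy_int: "(\<lambda>\<tau>. (snd (\<alpha> \<tau>))\<^sup>2) integrable_on {p..s}"
    by (rule integrable_on_subinterval[OF a(5) sub])
  have h_eq: "h = (\<lambda>\<tau>. (1/2) *\<^sub>R (1 + (snd (\<alpha> \<tau>))\<^sup>2))" unfolding h_def by auto
  have h_int: "h integrable_on {p..s}"
    unfolding h_eq by (intro integrable_cmul Henstock_Kurzweil_Integration.integrable_add
        energy_int integrable_const_ivl)
  have F_le: "norm (F \<tau>) \<le> h \<tau>" if "\<tau> \<in> {p..s}" for \<tau>
  proof (cases "\<tau> \<in> Z")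
    case True
    then show ?thesis unfolding F_def h_def by (simp add: add_nonneg_nonneg)
  next
    case False
    then have "inM N e (y \<tau>) (\<alpha> \<tau>)" using Z(2) that sub by blast
    then have "norm (fdyn e (\<alpha> \<tau>)) \<le> \<bar>snd (\<alpha> \<tau>)\<bar>"
      unfolding inM_def fdyn_def using norm_edge by auto
    then show ?thesis
      unfolding F_def h_def using False abs_le_half_one_plus_square[of "snd (\<alpha> \<tau>)"] by simp
  qed
  have "norm (y s - x) = norm (integral {p..s} F)" using a(7) s F_eq by simp
  also have "\<dots> \<le> integral {p..s} h"
    by (rule Henstock_Kurzweil_Integration.integral_norm_bound_integral[OF F_int h_int F_le])
  also have "\<dots> = ((s - p) + integral {p..s} (\<lambda>\<tau>. (snd (\<alpha> \<tau>))\<^sup>2)) / 2"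
    unfolding h_eq
    using Henstock_Kurzweil_Integration.integral_add[OF integrable_const_ivl energy_int] s
    by (simp add: integral_cmul)
  also have "\<dots> \<le> ((q - p) + integral {p..q} (\<lambda>\<tau>. (snd (\<alpha> \<tau>))\<^sup>2)) / 2"
    using integral_subset_le[OF sub energy_int a(5)] s by simp
  finally show ?thesis .
qed

lemma admissible_two_segments:
  assumes i: "i \<in> {1..N}" and j: "j \<in> {1..N}"
    and w: "w \<in> J_edge (e i)" "w \<in> J_edge (e j)"
    and x2: "x2 \<in> J_edge (e i)" and x1: "x1 \<in> J_edge (e j)" and pq: "p < q"
  shows "\<exists>y \<alpha>. admissible N e q p x2 y \<alpha> \<and> y q = x1 \<and>
           (\<forall>\<tau>. \<bar>snd (\<alpha> \<tau>)\<bar> \<le> 2 * max \<bar>norm w - norm x2\<bar> \<bar>norm x1 - norm w\<bar> / (q - p))"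
proof -
  let ?D = "max \<bar>norm w - norm x2\<bar> \<bar>norm x1 - norm w\<bar>"
  define m where "m = (p + q) / 2"
  have m: "p < m" "m < q" "m - p = (q - p) / 2" "q - m = (q - p) / 2"
    unfolding m_def using pq by (auto simp: field_simps)
  define y1 where "y1 = (\<lambda>s. x2 + ((s - p) / (m - p)) *\<^sub>R (w - x2))"
  define y2 where "y2 = (\<lambda>s. w + ((s - m) / (q - m)) *\<^sub>R (x1 - w))"
  define v1 where "v1 = (norm w - norm x2) / (m - p)"
  define v2 where "v2 = (norm x1 - norm w) / (q - m)"
  have S1: "admissible N e m p x2 y1 (\<lambda>s. (i, v1))"
    unfolding y1_def v1_def by (rule admissible_segment[OF i x2 w(1) m(1)])
  have "admissible N e q m w y2 (\<lambda>s. (j, v2))"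
    unfolding y2_def v2_def by (rule admissible_segment[OF j w(2) x1 m(2)])
  moreover have "y1 m = w" unfolding y1_def using m by simp
  ultimately have "admissible N e q p x2 (\<lambda>s. if s \<le> m then y1 s else y2 s)
      (\<lambda>s. if s \<le> m then (i, v1) else (j, v2))"
    using admissible_concat[OF S1] m by simp
  moreover have "(\<lambda>s. if s \<le> m then y1 s else y2 s) q = x1" unfolding y2_def using m by simp
  moreover have "\<forall>\<tau>. \<bar>snd ((\<lambda>s. if s \<le> m then (i, v1) else (j, v2)) \<tau>)\<bar> \<le> 2 * ?D / (q - p)"
  proof -
    have "\<bar>v1\<bar> = 2 * \<bar>norm w - norm x2\<bar> / (q - p)" "\<bar>v2\<bar> = 2 * \<bar>norm x1 - norm w\<bar> / (q - p)"
    proof -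
      have "\<bar>a * 2 - b * 2\<bar> = 2 * \<bar>a - b\<bar>" for a b :: real by (simp add: abs_if)
      then show "\<bar>v1\<bar> = 2 * \<bar>norm w - norm x2\<bar> / (q - p)" "\<bar>v2\<bar> = 2 * \<bar>norm x1 - norm w\<bar> / (q - p)"
        unfolding v1_def v2_def m(3,4) using pq by (simp_all add: abs_div)
    qed
    moreover have "2 * \<bar>norm w - norm x2\<bar> / (q - p) \<le> 2 * ?D / (q - p)"
      "2 * \<bar>norm x1 - norm w\<bar> / (q - p) \<le> 2 * ?D / (q - p)"
      using pq by (intro divide_right_mono mult_left_mono; simp)+
    ultimately show ?thesis by simp
  qed
  ultimately show ?thesis by blast
qed

text \<open>Along the common edge if there is one, otherwise through the vertex.\<close>

lemma admissible_transfer: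
  assumes x1: "x1 \<in> G" and x2: "x2 \<in> G" and pq: "p < q"
  shows "\<exists>y \<alpha>. admissible N e q p x2 y \<alpha> \<and> y q = x1 \<and>
           (\<forall>\<tau>. \<bar>snd (\<alpha> \<tau>)\<bar> \<le> 2 * gdist N e x2 x1 / (q - p))"
proof -
  obtain i j w where i: "i \<in> {1..N}" and j: "j \<in> {1..N}"
    and w: "w \<in> J_edge (e i)" "w \<in> J_edge (e j)" and x2: "x2 \<in> J_edge (e i)" and x1: "x1 \<in> J_edge (e j)"
    and D: "max \<bar>norm w - norm x2\<bar> \<bar>norm x1 - norm w\<bar> \<le> gdist N e x2 x1"
  proof (cases "\<exists>i\<in>{1..N}. x2 \<in> J_edge (e i) \<and> x1 \<in> J_edge (e i)")
    case True
    then obtain i where i: "i \<in> {1..N}" "x2 \<in> J_edge (e i)" "x1 \<in> J_edge (e i)" by blast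
    have "max \<bar>norm x1 - norm x2\<bar> \<bar>norm x1 - norm x1\<bar> \<le> gdist N e x2 x1"
      unfolding gdist_def using i norm_triangle_ineq3[of x1 x2] by (auto simp: norm_minus_commute)
    then show thesis using that i(1) i(1) i(3) i(3) i(2) i(3) by blast
  next
    case False
    obtain i where i: "i \<in> {1..N}" "x2 \<in> J_edge (e i)" using x2 mem_Graph_iff by blast
    obtain j where j: "j \<in> {1..N}" "x1 \<in> J_edge (e j)" using x1 mem_Graph_iff by blast
    have "max \<bar>norm 0 - norm x2\<bar> \<bar>norm x1 - norm (0::'a)\<bar> \<le> gdist N e x2 x1"
      unfolding gdist_def using False by auto
    then show thesis using that i(1) j(1) zero_in_J_edge zero_in_J_edge i(2) j(2) by blast
  qed
  then obtain y \<alpha> where adm: "admissible N e q p x2 y \<alpha>" and yq: "y q = x1"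
    and speed: "\<forall>\<tau>. \<bar>snd (\<alpha> \<tau>)\<bar> \<le> 2 * max \<bar>norm w - norm x2\<bar> \<bar>norm x1 - norm w\<bar> / (q - p)"
    using admissible_two_segments[OF i j w x2 x1 pq] by blast
  have "2 * max \<bar>norm w - norm x2\<bar> \<bar>norm x1 - norm w\<bar> / (q - p) \<le> 2 * gdist N e x2 x1 / (q - p)"
    using D pq by (intro divide_right_mono mult_left_mono) simp_all
  then show ?thesis using adm yq speed by (blast intro: order_trans)
qed

end

section \<open>Costs and the value function\<close>

locale star_graph_control = star_graph N e
  for N :: nat and e :: "nat \<Rightarrow> 'a::euclidean_space" +
  fixes T :: real and l :: "nat \<Rightarrow> 'a \<Rightarrow> real \<Rightarrow> real" and ls :: "real \<Rightarrow> real"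
    and g :: "nat \<Rightarrow> 'a \<Rightarrow> real" and gs :: real
  assumes T_pos: "0 < T"
    and l_continuous: "\<And>i. i \<in> {1..N} \<Longrightarrow> continuous_on (J_edge (e i) \<times> {0..T}) (\<lambda>(x, t). l i x t)"
    and l_bounded: "\<And>i. i \<in> {1..N} \<Longrightarrow> bounded ((\<lambda>(x, t). l i x t) ` (J_edge (e i) \<times> {0..T}))"
    and g_bounded: "\<And>i. i \<in> {1..N} \<Longrightarrow> bounded (g i ` J_edge (e i))"
    and ls_continuous: "continuous_on {0..T} ls"
begin

abbreviation "L \<equiv> Lrun N e l ls"
abbreviation "gT \<equiv> gfin N e g gs"
abbreviation "cst t y \<alpha> \<equiv> cost N e l ls g gs T t y \<alpha>"
abbreviation "u x t \<equiv> value_fun N e l ls g gs T x t"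

lemma continuous_on_l_time:
  assumes "i \<in> {1..N}" "z \<in> J_edge (e i)"
  shows "continuous_on {0..T} (l i z)"
proof -
  have "continuous_on {0..T} ((\<lambda>(x, t). l i x t) \<circ> (\<lambda>t. (z, t)))"
    using assms by (intro continuous_on_compose continuous_on_subset[OF l_continuous])
      (auto intro!: continuous_intros)
  then show ?thesis by (simp add: o_def)
qed

lemma continuous_on_ellO: "continuous_on {0..T} (ellO N l ls)"
proof -
  have "continuous_on {0..T} (\<lambda>t. Min {l i 0 t | i. i \<in> {1..N}})"
    using N_pos by (intro continuous_on_Min_family) (auto intro: continuous_on_l_time)
  then show ?thesis unfolding ellO_def[abs_def] using ls_continuous by (intro continuous_on_min)
qed

lemma Lrun_edge: "i \<in> {1..N} \<Longrightarrow> z \<in> J_edge (e i) \<Longrightarrow> z \<noteq> 0 \<Longrightarrow> L z t = l i z t"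
  unfolding Lrun_def using edge_index_eqI by simp

lemma Lrun_zero: "L 0 t = ellO N l ls t"
  unfolding Lrun_def by simp

lemma gfin_edge: "i \<in> {1..N} \<Longrightarrow> z \<in> J_edge (e i) \<Longrightarrow> z \<noteq> 0 \<Longrightarrow> gT z = g i z"
  unfolding gfin_def using edge_index_eqI by simp

lemma data_bounded: "\<exists>C\<ge>0. (\<forall>z\<in>G. \<forall>\<tau>\<in>{0..T}. \<bar>L z \<tau>\<bar> \<le> C) \<and> (\<forall>z\<in>G. \<bar>gT z\<bar> \<le> C)"
proof -
  define S where "S = (\<Union>i\<in>{1..N}. (\<lambda>(x, t). l i x t) ` (J_edge (e i) \<times> {0..T}))
    \<union> ellO N l ls ` {0..T} \<union> (\<Union>i\<in>{1..N}. g i ` J_edge (e i)) \<union> {gO N g gs}"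
  have "bounded S" unfolding S_def
    using l_bounded g_bounded compact_imp_bounded[OF compact_continuous_image[OF continuous_on_ellO]]
    by (auto intro!: bounded_UN)
  then obtain C where C: "\<forall>x\<in>S. \<bar>x\<bar> \<le> C" unfolding bounded_real by blast
  have "L z \<tau> \<in> S" if "z \<in> G" "\<tau> \<in> {0..T}" for z \<tau>
  proof (cases "z = 0")
    case False
    with that obtain i where "i \<in> {1..N}" "z \<in> J_edge (e i)" "L z \<tau> = l i z \<tau>"
      using mem_Graph_iff Lrun_edge by blast
    then show ?thesis using that unfolding S_def by force
  qed (use that in \<open>auto simp: S_def Lrun_zero\<close>)
  moreover have "gT z \<in> S" if "z \<in> G" for z
  proof (cases "z = 0")
    case False
    with that obtain i where "i \<in> {1..N}" "z \<in> J_edge (e i)" "gT z = g i z"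
      using mem_Graph_iff gfin_edge by blast
    then show ?thesis unfolding S_def by blast
  qed (auto simp: S_def gfin_def)
  moreover have "0 \<le> C" using C unfolding S_def by fastforce
  ultimately show ?thesis using C by blast
qed

definition data_bound :: real where
  "data_bound = (SOME C. C \<ge> 0 \<and> (\<forall>z\<in>G. \<forall>\<tau>\<in>{0..T}. \<bar>L z \<tau>\<bar> \<le> C) \<and> (\<forall>z\<in>G. \<bar>gT z\<bar> \<le> C))"

lemma data_bound:
  shows data_bound_nonneg: "0 \<le> data_bound"
    and abs_Lrun_le_data_bound: "\<And>z \<tau>. z \<in> G \<Longrightarrow> \<tau> \<in> {0..T} \<Longrightarrow> \<bar>L z \<tau>\<bar> \<le> data_bound"
    and abs_gfin_le_data_bound: "\<And>z. z \<in> G \<Longrightarrow> \<bar>gT z\<bar> \<le> data_bound"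
  using someI_ex[OF data_bounded] unfolding data_bound_def[symmetric] by blast+

text \<open>Since \<open>edge_proj\<close> extends each \<open>l i\<close> continuously off its edge, this exhibits \<open>L\<close>
  along a continuous path as a Borel combination of continuous functions.\<close>

lemma Lrun_eq_piecewise:
  assumes "z \<in> G"
  shows "L z \<tau> = (if z \<in> {0} then ellO N l ls \<tau> else 0)
           + (\<Sum>i\<in>{1..N}. if z \<in> J_edge (e i) - {0} then l i (edge_proj (e i) z) \<tau> else 0)"
proof (cases "z = 0")
  case False
  obtain j where j: "j \<in> {1..N}" "z \<in> J_edge (e j)" using assms mem_Graph_iff by blast
  have "(\<Sum>i\<in>{1..N}. if z \<in> J_edge (e i) - {0} then l i (edge_proj (e i) z) \<tau> else 0)
      = (\<Sum>i\<in>{1..N}. if i = j then l j z \<tau> else 0)"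
  proof (rule sum.cong)
    fix i assume i: "i \<in> {1..N}"
    show "(if z \<in> J_edge (e i) - {0} then l i (edge_proj (e i) z) \<tau> else 0)
        = (if i = j then l j z \<tau> else 0)"
    proof (cases "z \<in> J_edge (e i)")
      case True
      have "i = j" by (rule J_edge_index_unique[OF i j(1) True j(2) False])
      then show ?thesis using edge_proj_eq[OF j] j(2) False by simp
    qed (use j in auto)
  qed simp
  also have "\<dots> = l j z \<tau>" using j(1) by simp
  finally show ?thesis using False Lrun_edge[OF j False] by simp
qed (simp add: Lrun_zero)

lemma integrable_Lrun_along:
  assumes A: "admissible N e q p x y \<alpha>" and pq: "0 \<le> p" "q \<le> T"
  shows "(\<lambda>\<tau>. L (y \<tau>) \<tau>) integrable_on {p..q}"
proof -
  have y_cont: "continuous_on {p..q} y" by (rule admissible_continuous_on[OF A])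
  have y_meas: "y \<in> borel_measurable (lebesgue_on {p..q})"
    by (rule continuous_imp_measurable_on_sets_lebesgue[OF y_cont]) simp
  have ellO_meas: "ellO N l ls \<in> borel_measurable (lebesgue_on {p..q})"
    using continuous_on_subset[OF continuous_on_ellO] pq
    by (intro continuous_imp_measurable_on_sets_lebesgue) auto
  have l_meas: "(\<lambda>\<tau>. l i (edge_proj (e i) (y \<tau>)) \<tau>) \<in> borel_measurable (lebesgue_on {p..q})"
    if i: "i \<in> {1..N}" for i
  proof -
    have "continuous_on {p..q} (\<lambda>\<tau>. (edge_proj (e i) (y \<tau>), \<tau>))"
      by (intro continuous_on_Pair continuous_on_id continuous_on_compose2[OF continuous_on_edge_proj y_cont])
        auto
    then have "continuous_on {p..q} (\<lambda>\<tau>. (\<lambda>(x, t). l i x t) (edge_proj (e i) (y \<tau>), \<tau>))"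
      using edge_proj_in_J_edge pq by (intro continuous_on_compose2[OF l_continuous[OF i]]) auto
    then show ?thesis by (intro continuous_imp_measurable_on_sets_lebesgue) auto
  qed
  have zero_borel: "{0::'a} \<in> sets borel" by (intro borel_closed) simp
  have closed_sets: "{0::'a} \<in> sets borel" "\<And>i. J_edge (e i) - {0} \<in> sets borel"
    using closed_J_edge zero_borel by (auto intro: borel_closed sets.Diff)
  let ?H = "\<lambda>\<tau>. (if y \<tau> \<in> {0} then ellO N l ls \<tau> else 0)
      + (\<Sum>i\<in>{1..N}. if y \<tau> \<in> J_edge (e i) - {0} then l i (edge_proj (e i) (y \<tau>)) \<tau> else 0)"
  have "?H \<in> borel_measurable (lebesgue_on {p..q})"
    using y_meas closed_sets ellO_meas l_meas
    by (intro borel_measurable_add borel_measurable_sum borel_measurable_if_vimage) auto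
  moreover have "?H \<in> borel_measurable (lebesgue_on {p..q})
      \<longleftrightarrow> (\<lambda>\<tau>. L (y \<tau>) \<tau>) \<in> borel_measurable (lebesgue_on {p..q})"
    using admissibleD(1)[OF A] by (intro measurable_cong) (simp add: Lrun_eq_piecewise)
  ultimately have meas: "(\<lambda>\<tau>. L (y \<tau>) \<tau>) \<in> borel_measurable (lebesgue_on {p..q})" by blast
  show ?thesis
  proof (rule measurable_bounded_by_integrable_imp_integrable_real[OF meas integrable_const_ivl])
    fix \<tau> assume "\<tau> \<in> {p..q}"
    then show "\<bar>L (y \<tau>) \<tau>\<bar> \<le> data_bound"
      using admissibleD(1)[OF A] pq by (intro abs_Lrun_le_data_bound) auto
  qed simp
qed

lemma integrable_running_cost:
  assumes A: "admissible N e q p x y \<alpha>" and pq: "0 \<le> p" "q \<le> T"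
  shows "(\<lambda>\<tau>. L (y \<tau>) \<tau> + (snd (\<alpha> \<tau>))\<^sup>2 / 2) integrable_on {p..q}"
proof -
  have "(\<lambda>\<tau>. (1/2) *\<^sub>R (snd (\<alpha> \<tau>))\<^sup>2) integrable_on {p..q}"
    by (rule integrable_cmul[OF admissibleD(5)[OF A]])
  then show ?thesis
    using Henstock_Kurzweil_Integration.integrable_add[OF integrable_Lrun_along[OF A pq]] by simp
qed

lemma cost_eq_sum:
  assumes A: "admissible N e T t x y \<alpha>" and t: "0 \<le> t"
  shows "cst t y \<alpha> = integral {t..T} (\<lambda>\<tau>. L (y \<tau>) \<tau>)
           + integral {t..T} (\<lambda>\<tau>. (snd (\<alpha> \<tau>))\<^sup>2) / 2 + gT (y T)"
proof -
  have "(\<lambda>\<tau>. (1/2) *\<^sub>R (snd (\<alpha> \<tau>))\<^sup>2) integrable_on {t..T}"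
    by (rule integrable_cmul[OF admissibleD(5)[OF A]])
  then have "integral {t..T} (\<lambda>\<tau>. L (y \<tau>) \<tau> + (1/2) *\<^sub>R (snd (\<alpha> \<tau>))\<^sup>2)
      = integral {t..T} (\<lambda>\<tau>. L (y \<tau>) \<tau>) + integral {t..T} (\<lambda>\<tau>. (1/2) *\<^sub>R (snd (\<alpha> \<tau>))\<^sup>2)"
    using integrable_Lrun_along[OF A t order_refl]
    by (intro Henstock_Kurzweil_Integration.integral_add)
  then show ?thesis unfolding cost_def by (simp add: integral_cmul)
qed

lemma abs_integral_Lrun_le:
  assumes A: "admissible N e q p x y \<alpha>" and pq: "0 \<le> p" "p \<le> q" "q \<le> T"
  shows "\<bar>integral {p..q} (\<lambda>\<tau>. L (y \<tau>) \<tau>)\<bar> \<le> data_bound * (q - p)"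
proof -
  have int: "(\<lambda>\<tau>. L (y \<tau>) \<tau>) integrable_on {p..q}" by (rule integrable_Lrun_along[OF A pq(1,3)])
  have bound: "- data_bound \<le> L (y \<tau>) \<tau> \<and> L (y \<tau>) \<tau> \<le> data_bound" if "\<tau> \<in> {p..q}" for \<tau>
    using abs_Lrun_le_data_bound[of "y \<tau>" \<tau>] admissibleD(1)[OF A] that pq by auto
  have "integral {p..q} (\<lambda>\<tau>. L (y \<tau>) \<tau>) \<le> integral {p..q} (\<lambda>\<tau>. data_bound)"
    using bound by (intro integral_le[OF int integrable_const_ivl]) auto
  moreover have "integral {p..q} (\<lambda>\<tau>. - data_bound) \<le> integral {p..q} (\<lambda>\<tau>. L (y \<tau>) \<tau>)"
    using bound by (intro integral_le[OF integrable_const_ivl int]) auto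
  ultimately show ?thesis using pq by (simp add: abs_le_iff algebra_simps)
qed

lemma energy_nonneg: "admissible N e q p x y \<alpha> \<Longrightarrow> 0 \<le> integral {p..q} (\<lambda>\<tau>. (snd (\<alpha> \<tau>))\<^sup>2)"
  by (rule integral_nonneg[OF admissibleD(5)]) auto

lemma cost_bounds:
  assumes A: "admissible N e T t x y \<alpha>" and t: "0 \<le> t" "t \<le> T"
  shows "cst t y \<alpha> \<ge> integral {t..T} (\<lambda>\<tau>. (snd (\<alpha> \<tau>))\<^sup>2) / 2 - data_bound * (T + 1)"
    and "cst t y \<alpha> \<le> integral {t..T} (\<lambda>\<tau>. (snd (\<alpha> \<tau>))\<^sup>2) / 2 + data_bound * (T + 1)"
proof -
  have "\<bar>integral {t..T} (\<lambda>\<tau>. L (y \<tau>) \<tau>)\<bar> \<le> data_bound * (T - t)"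
    using abs_integral_Lrun_le[OF A t(1,2)] by simp
  moreover have "data_bound * (T - t) \<le> data_bound * T"
    using data_bound_nonneg t by (simp add: mult_left_mono)
  moreover have "\<bar>gT (y T)\<bar> \<le> data_bound"
    using abs_gfin_le_data_bound admissibleD(1)[OF A] t by auto
  ultimately show "cst t y \<alpha> \<ge> integral {t..T} (\<lambda>\<tau>. (snd (\<alpha> \<tau>))\<^sup>2) / 2 - data_bound * (T + 1)"
    and "cst t y \<alpha> \<le> integral {t..T} (\<lambda>\<tau>. (snd (\<alpha> \<tau>))\<^sup>2) / 2 + data_bound * (T + 1)"
    using cost_eq_sum[OF A t(1)] by (simp_all add: algebra_simps)
qed

lemma cost_set_bdd_below:
  assumes t: "0 \<le> t" "t < T"
  shows "bdd_below {cst t y \<alpha> | y \<alpha>. admissible N e T t x y \<alpha>}"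
proof (rule bdd_belowI)
  fix c assume "c \<in> {cst t y \<alpha> | y \<alpha>. admissible N e T t x y \<alpha>}"
  then obtain y \<alpha> where "c = cst t y \<alpha>" "admissible N e T t x y \<alpha>" by blast
  then show "- data_bound * (T + 1) \<le> c"
    using cost_bounds(1)[of t x y \<alpha>] energy_nonneg[of T t x y \<alpha>] t by simp
qed

lemma value_fun_le_cost:
  assumes "0 \<le> t" "t < T" "admissible N e T t x y \<alpha>"
  shows "u x t \<le> cst t y \<alpha>"
  unfolding value_fun_def using assms by (intro cInf_lower cost_set_bdd_below) auto

lemma value_fun_le_data_bound:
  assumes x: "x \<in> G" and t: "0 \<le> t" "t < T"
  shows "u x t \<le> data_bound * (T + 1)"
proof -
  obtain i where A: "admissible N e T t x (\<lambda>s. x) (\<lambda>s. (i, 0))"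
    using admissible_stay[OF x t(2)] by blast
  then show ?thesis
    using value_fun_le_cost[OF t A] cost_bounds(2)[OF A t(1)] t by simp
qed

lemma value_fun_near_optimal:
  assumes x: "x \<in> G" and t: "0 \<le> t" "t < T" and \<epsilon>: "\<epsilon> > 0"
  shows "\<exists>y \<alpha>. admissible N e T t x y \<alpha> \<and> cst t y \<alpha> < u x t + \<epsilon>"
proof -
  obtain i where "admissible N e T t x (\<lambda>s. x) (\<lambda>s. (i, 0))"
    using admissible_stay[OF x t(2)] by blast
  then have "{cst t y \<alpha> | y \<alpha>. admissible N e T t x y \<alpha>} \<noteq> {}" by blast
  moreover have "Inf {cst t y \<alpha> | y \<alpha>. admissible N e T t x y \<alpha>} < u x t + \<epsilon>"
    using \<epsilon> unfolding value_fun_def by simp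
  ultimately show ?thesis
    using cInf_less_iff[OF _ cost_set_bdd_below[OF t]] by blast
qed

lemma near_optimal_energy_le:
  assumes x: "x \<in> G" and t: "0 \<le> t" "t < T"
    and A: "admissible N e T t x y \<alpha>" and near: "cst t y \<alpha> \<le> u x t + 1"
  shows "integral {t..T} (\<lambda>\<tau>. (snd (\<alpha> \<tau>))\<^sup>2) \<le> 4 * data_bound * (T + 1) + 2"
  using cost_bounds(1)[OF A t(1)] near value_fun_le_data_bound[OF x t] t by simp

lemma Lrun_uniform_continuity_in_time:
  assumes \<epsilon>: "\<epsilon> > 0"
  shows "\<exists>\<rho>>0. \<forall>z\<in>G. norm z \<le> R \<longrightarrow>
           (\<forall>s1\<in>{0..T}. \<forall>s2\<in>{0..T}. \<bar>s1 - s2\<bar> < \<rho> \<longrightarrow> \<bar>L z s1 - L z s2\<bar> \<le> \<epsilon>)"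
proof -
  have "\<exists>d>0. \<forall>z\<in>cball 0 R \<inter> J_edge (e i). \<forall>s1\<in>{0..T}. \<forall>s2\<in>{0..T}.
      \<bar>s1 - s2\<bar> < d \<longrightarrow> \<bar>l i z s1 - l i z s2\<bar> \<le> \<epsilon>" if i: "i \<in> {1..N}" for i
  proof (intro uniform_continuity_in_time compact_Int_closed closed_J_edge \<epsilon>)
    show "continuous_on ((cball 0 R \<inter> J_edge (e i)) \<times> {0..T}) (\<lambda>(x, t). l i x t)"
      by (rule continuous_on_subset[OF l_continuous[OF i]]) auto
  qed simp
  then obtain d where d: "\<And>i. i \<in> {1..N} \<Longrightarrow> d i > 0"
    and d_edge: "\<And>i. i \<in> {1..N} \<Longrightarrow> \<forall>z\<in>cball 0 R \<inter> J_edge (e i). \<forall>s1\<in>{0..T}. \<forall>s2\<in>{0..T}.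
      \<bar>s1 - s2\<bar> < d i \<longrightarrow> \<bar>l i z s1 - l i z s2\<bar> \<le> \<epsilon>"
    by metis
  have "uniformly_continuous_on {0..T} (ellO N l ls)"
    by (rule compact_uniformly_continuous[OF continuous_on_ellO compact_Icc])
  then obtain d0 where d0: "d0 > 0" and d0_vertex: "\<forall>s2\<in>{0..T}. \<forall>s1\<in>{0..T}.
      dist s1 s2 < d0 \<longrightarrow> dist (ellO N l ls s1) (ellO N l ls s2) < \<epsilon>"
    unfolding uniformly_continuous_on_def using \<epsilon> by blast
  define \<rho> where "\<rho> = min d0 (Min (d ` {1..N}))"
  have "Min (d ` {1..N}) > 0" using d N_pos by (subst Min_gr_iff) auto
  then have \<rho>: "\<rho> > 0" unfolding \<rho>_def using d0 by simp
  have \<rho>_le: "\<rho> \<le> d i" if "i \<in> {1..N}" for i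
    unfolding \<rho>_def using that by (auto intro: min.coboundedI2 Min_le)
  have "\<bar>L z s1 - L z s2\<bar> \<le> \<epsilon>"
    if z: "z \<in> G" "norm z \<le> R" and s: "s1 \<in> {0..T}" "s2 \<in> {0..T}" and close: "\<bar>s1 - s2\<bar> < \<rho>"
    for z s1 s2
  proof (cases "z = 0")
    case True
    have "dist s1 s2 < d0" using close unfolding \<rho>_def by (simp add: dist_real_def)
    then show ?thesis
      using d0_vertex[rule_format, OF s(2) s(1)] True by (simp add: Lrun_zero dist_real_def)
  next
    case False
    obtain i where i: "i \<in> {1..N}" "z \<in> J_edge (e i)" using z(1) mem_Graph_iff by blast
    then show ?thesis
      using d_edge[OF i(1)] \<rho>_le[OF i(1)] z s close Lrun_edge[OF i False] by auto
  qed
  with \<rho> show ?thesis by blast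
qed

section \<open>Comparing the value at nearby points\<close>

lemma cost_concat:
  assumes P: "admissible N e q p x yp \<alpha>p" and R: "admissible N e T q (yp q) y \<alpha>"
    and pq: "0 \<le> p" "p \<le> q" "q < T"
  shows "cst p (\<lambda>s. if s \<le> q then yp s else y s) (\<lambda>s. if s \<le> q then \<alpha>p s else \<alpha> s)
           = integral {p..q} (\<lambda>\<tau>. L (yp \<tau>) \<tau> + (snd (\<alpha>p \<tau>))\<^sup>2 / 2) + cst q y \<alpha>"
proof -
  have "integral {p..T} (\<lambda>\<tau>. L (if \<tau> \<le> q then yp \<tau> else y \<tau>) \<tau>
        + (snd (if \<tau> \<le> q then \<alpha>p \<tau> else \<alpha> \<tau>))\<^sup>2 / 2)
      = integral {p..T} (\<lambda>\<tau>. if \<tau> \<le> q then L (yp \<tau>) \<tau> + (snd (\<alpha>p \<tau>))\<^sup>2 / 2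
          else L (y \<tau>) \<tau> + (snd (\<alpha> \<tau>))\<^sup>2 / 2)"
    by (rule integral_cong) simp
  also have "\<dots> = integral {p..q} (\<lambda>\<tau>. L (yp \<tau>) \<tau> + (snd (\<alpha>p \<tau>))\<^sup>2 / 2)
      + integral {q..T} (\<lambda>\<tau>. L (y \<tau>) \<tau> + (snd (\<alpha> \<tau>))\<^sup>2 / 2)"
    using pq by (intro integral_piecewise integrable_running_cost[OF P] integrable_running_cost[OF R]) auto
  finally show ?thesis unfolding cost_def using pq by simp
qed

lemma integral_running_cost_le:
  assumes A: "admissible N e q p x y \<alpha>" and pq: "0 \<le> p" "p \<le> q" "q \<le> T"
    and speed: "\<And>\<tau>. \<bar>snd (\<alpha> \<tau>)\<bar> \<le> v"
  shows "integral {p..q} (\<lambda>\<tau>. L (y \<tau>) \<tau> + (snd (\<alpha> \<tau>))\<^sup>2 / 2) \<le> (data_bound + v\<^sup>2 / 2) * (q - p)"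
proof -
  have "L (y \<tau>) \<tau> + (snd (\<alpha> \<tau>))\<^sup>2 / 2 \<le> data_bound + v\<^sup>2 / 2" if "\<tau> \<in> {p..q}" for \<tau>
  proof -
    have "L (y \<tau>) \<tau> \<le> data_bound"
      using abs_Lrun_le_data_bound[of "y \<tau>" \<tau>] admissibleD(1)[OF A] that pq by auto
    moreover have "(snd (\<alpha> \<tau>))\<^sup>2 \<le> v\<^sup>2"
      using speed[of \<tau>] by (metis abs_ge_zero order_trans power2_abs power_mono)
    ultimately show ?thesis by simp
  qed
  then have "integral {p..q} (\<lambda>\<tau>. L (y \<tau>) \<tau> + (snd (\<alpha> \<tau>))\<^sup>2 / 2)
      \<le> integral {p..q} (\<lambda>\<tau>. data_bound + v\<^sup>2 / 2)"
    by (intro integral_le[OF integrable_running_cost[OF A pq(1,3)] integrable_const_ivl]) auto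
  then show ?thesis using pq by (simp add: mult.commute)
qed

lemma cost_rescaled_le:
  assumes A: "admissible N e T t1 x y \<alpha>" and t1: "0 \<le> t1" "t1 < T" and p: "0 \<le> p" "p < T"
    and k: "k = (T - t1) / (T - p)"
    and shift: "\<And>\<tau>. \<tau> \<in> {p..T} \<Longrightarrow>
      L (y (t1 + k * (\<tau> - p))) \<tau> \<le> L (y (t1 + k * (\<tau> - p))) (t1 + k * (\<tau> - p)) + \<epsilon>"
  shows "cst p (\<lambda>s. y (t1 + k * (s - p))) (\<lambda>s. (fst (\<alpha> (t1 + k * (s - p))), k * snd (\<alpha> (t1 + k * (s - p)))))
    \<le> integral {t1..T} (\<lambda>r. L (y r) r) / k + k * (integral {t1..T} (\<lambda>r. (snd (\<alpha> r))\<^sup>2) / 2)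
       + \<epsilon> * (T - p) + gT (y T)"
proof -
  define c where "c = t1 - k * p"
  have k_pos: "k > 0" unfolding k using t1 p by simp
  have affine: "t1 + k * (s - p) = c + k * s" for s unfolding c_def by (simp add: algebra_simps)
  have "k * (T - p) = T - t1" unfolding k using p by simp
  then have lower: "(t1 - c) / k = p" and upper: "(T - c) / k = T"
    unfolding c_def using k_pos by (simp_all add: field_simps)
  define Q where "Q r = L (y r) r + (k\<^sup>2 / 2) *\<^sub>R (snd (\<alpha> r))\<^sup>2" for r
  have Q_int: "Q integrable_on {t1..T}" unfolding Q_def[abs_def]
    by (intro Henstock_Kurzweil_Integration.integrable_add integrable_Lrun_along[OF A t1(1) order_refl]
        integrable_cmul admissibleD(5)[OF A])
  have "integral {t1..T} Q = integral {t1..T} (\<lambda>r. L (y r) r) + (k\<^sup>2 / 2) * integral {t1..T} (\<lambda>r. (snd (\<alpha> r))\<^sup>2)"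
    unfolding Q_def[abs_def]
    using integrable_Lrun_along[OF A t1(1) order_refl] integrable_cmul[OF admissibleD(5)[OF A]]
    by (subst Henstock_Kurzweil_Integration.integral_add) auto
  moreover have Qc_int: "(\<lambda>s. Q (c + k * s)) integrable_on {p..T}"
    and "integral {p..T} (\<lambda>s. Q (c + k * s)) = integral {t1..T} Q / k"
    using integrable_on_affine_comp[OF Q_int k_pos, of c] unfolding lower upper
    by (simp_all add: divide_inverse_commute)
  ultimately have Qc: "integral {p..T} (\<lambda>s. Q (c + k * s))
      = integral {t1..T} (\<lambda>r. L (y r) r) / k + k * (integral {t1..T} (\<lambda>r. (snd (\<alpha> r))\<^sup>2) / 2)"
    using k_pos by (simp add: field_simps power2_eq_square)
  have "admissible N e T p x (\<lambda>s. y (t1 + k * (s - p)))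
      (\<lambda>s. (fst (\<alpha> (t1 + k * (s - p))), k * snd (\<alpha> (t1 + k * (s - p)))))"
    using admissible_rescale[OF A t1(2) p(2)] unfolding k[symmetric] .
  then have "(\<lambda>\<tau>. L (y (t1 + k * (\<tau> - p))) \<tau> + (k * snd (\<alpha> (t1 + k * (\<tau> - p))))\<^sup>2 / 2)
      integrable_on {p..T}"
    using integrable_running_cost p(1) by fastforce
  then have "integral {p..T} (\<lambda>\<tau>. L (y (t1 + k * (\<tau> - p))) \<tau> + (k * snd (\<alpha> (t1 + k * (\<tau> - p))))\<^sup>2 / 2)
      \<le> integral {p..T} (\<lambda>s. Q (c + k * s) + \<epsilon>)"
  proof (rule integral_le[OF _ Henstock_Kurzweil_Integration.integrable_add[OF Qc_int integrable_const_ivl]])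
    fix \<tau> assume "\<tau> \<in> {p..T}"
    from shift[OF this] show "L (y (t1 + k * (\<tau> - p))) \<tau> + (k * snd (\<alpha> (t1 + k * (\<tau> - p))))\<^sup>2 / 2
        \<le> Q (c + k * \<tau>) + \<epsilon>"
      unfolding Q_def affine by (simp add: power_mult_distrib)
  qed
  also have "\<dots> = integral {p..T} (\<lambda>s. Q (c + k * s)) + \<epsilon> * (T - p)"
    using Henstock_Kurzweil_Integration.integral_add[OF Qc_int integrable_const_ivl, of \<epsilon>] p by simp
  finally show ?thesis
    unfolding cost_def Qc using \<open>k * (T - p) = T - t1\<close> by simp
qed

lemma Lrun_along_rescaled_le:
  assumes A: "admissible N e T t1 x1 y \<alpha>" and t1: "0 \<le> t1" "t1 < T" and q: "0 \<le> q" "q < T"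
    and close: "\<bar>t1 - q\<bar> < 2 * h"
    and energy: "integral {t1..T} (\<lambda>r. (snd (\<alpha> r))\<^sup>2) \<le> E"
    and x1_norm: "norm x1 \<le> R"
    and L_cont: "\<forall>z\<in>G. norm z \<le> R + (T + E) / 2 \<longrightarrow>
      (\<forall>s1\<in>{0..T}. \<forall>s2\<in>{0..T}. \<bar>s1 - s2\<bar> < 2 * h \<longrightarrow> \<bar>L z s1 - L z s2\<bar> \<le> \<epsilon>)"
    and \<tau>: "\<tau> \<in> {q..T}"
  defines "\<phi> \<equiv> t1 + (T - t1) / (T - q) * (\<tau> - q)"
  shows "L (y \<phi>) \<tau> \<le> L (y \<phi>) \<phi> + \<epsilon>"
proof -
  have \<phi>: "\<phi> \<in> {t1..T}"
    unfolding \<phi>_def by (rule rescaled_time_mem[OF _ q(2) \<tau>]) (use t1 in simp)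
  have "norm (y \<phi> - x1) \<le> ((T - t1) + E) / 2"
    using admissible_norm_diff_le[OF A \<phi>] energy by simp
  also have "\<dots> \<le> (T + E) / 2" using t1 by simp
  finally have y_norm: "norm (y \<phi>) \<le> R + (T + E) / 2"
    using norm_triangle_sub[of "y \<phi>" x1] x1_norm by linarith
  have "\<bar>\<phi> - \<tau>\<bar> \<le> \<bar>t1 - q\<bar>"
    unfolding \<phi>_def by (rule rescaled_time_dist_le[OF q(2) \<tau>])
  then have dist: "\<bar>\<phi> - \<tau>\<bar> < 2 * h" using close by linarith
  have y_G: "y \<phi> \<in> G" using admissibleD(1)[OF A] \<phi> by blast
  have times: "\<phi> \<in> {0..T}" "\<tau> \<in> {0..T}" using \<phi> \<tau> t1(1) q(1) by auto
  have "\<bar>L (y \<phi>) \<phi> - L (y \<phi>) \<tau>\<bar> \<le> \<epsilon>"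
    by (rule L_cont[rule_format, OF y_G y_norm times dist])
  then show ?thesis by linarith
qed

text \<open>The competitor control: reach \<open>x1\<close> from \<open>x2\<close> during \<open>[t2, t2 + h]\<close>, then follow the
  given control of \<open>(x1, t1)\<close> with time rescaled affinely from \<open>[t2 + h, T]\<close> onto \<open>[t1, T]\<close>.\<close>

lemma transfer_cost_estimate:
  assumes x1: "x1 \<in> G" and x2: "x2 \<in> G"
    and t1: "0 \<le> t1" "t1 \<le> T - \<eta>" and t2: "0 \<le> t2" "t2 \<le> T - \<eta>"
    and h: "0 < h" "h \<le> \<eta> / 2" and close: "\<bar>t1 - t2\<bar> < h"
    and A: "admissible N e T t1 x1 y \<alpha>"
    and energy: "integral {t1..T} (\<lambda>r. (snd (\<alpha> r))\<^sup>2) \<le> E"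
    and x1_norm: "norm x1 \<le> R"
    and L_cont: "\<forall>z\<in>G. norm z \<le> R + (T + E) / 2 \<longrightarrow>
      (\<forall>s1\<in>{0..T}. \<forall>s2\<in>{0..T}. \<bar>s1 - s2\<bar> < 2 * h \<longrightarrow> \<bar>L z s1 - L z s2\<bar> \<le> \<epsilon>)"
    and \<epsilon>: "0 \<le> \<epsilon>"
  shows "\<exists>y' \<alpha>'. admissible N e T t2 x2 y' \<alpha>' \<and>
     cst t2 y' \<alpha>' \<le> cst t1 y \<alpha> + (data_bound + 2 * (data_bound * T + E) / \<eta>) * h
       + 2 * (gdist N e x2 x1)\<^sup>2 / h + \<epsilon> * T"
proof -
  define q where "q = t2 + h"
  define d where "d = gdist N e x2 x1"
  have q: "t2 < q" "q < T" "\<eta> / 2 \<le> T - q" "\<bar>t1 - q\<bar> < 2 * h"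
    unfolding q_def using t2 h close by auto
  have t1_T: "t1 < T" using t1 h by simp
  obtain yp \<alpha>p where P: "admissible N e q t2 x2 yp \<alpha>p" and yp_q: "yp q = x1"
    and speed: "\<And>\<tau>. \<bar>snd (\<alpha>p \<tau>)\<bar> \<le> 2 * d / h"
    using admissible_transfer[OF x1 x2 q(1)] unfolding d_def q_def by auto
  define k where "k = (T - t1) / (T - q)"
  define \<phi> where "\<phi> \<tau> = t1 + k * (\<tau> - q)" for \<tau>
  have R: "admissible N e T q (yp q) (\<lambda>s. y (\<phi> s)) (\<lambda>s. (fst (\<alpha> (\<phi> s)), k * snd (\<alpha> (\<phi> s))))"
    unfolding yp_q \<phi>_def k_def by (rule admissible_rescale[OF A t1_T q(2)])
  let ?Y = "\<lambda>s. if s \<le> q then yp s else y (\<phi> s)"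
  let ?\<A> = "\<lambda>s. if s \<le> q then \<alpha>p s else (fst (\<alpha> (\<phi> s)), k * snd (\<alpha> (\<phi> s)))"
  have "admissible N e T t2 x2 ?Y ?\<A>" using admissible_concat[OF P R] q by simp
  moreover have "cst t2 ?Y ?\<A> \<le> cst t1 y \<alpha> + (data_bound + 2 * (data_bound * T + E) / \<eta>) * h
       + 2 * d\<^sup>2 / h + \<epsilon> * T"
  proof -
    have prefix: "integral {t2..q} (\<lambda>\<tau>. L (yp \<tau>) \<tau> + (snd (\<alpha>p \<tau>))\<^sup>2 / 2) \<le> data_bound * h + 2 * d\<^sup>2 / h"
      using integral_running_cost_le[OF P t2(1) _ _ speed] q h
      by (simp add: q_def power_divide algebra_simps power2_eq_square)
    have shift: "L (y (\<phi> \<tau>)) \<tau> \<le> L (y (\<phi> \<tau>)) (\<phi> \<tau>) + \<epsilon>" if "\<tau> \<in> {q..T}" for \<tau>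
      unfolding \<phi>_def k_def using q t2
      by (intro Lrun_along_rescaled_le[OF A t1(1) t1_T _ q(2) q(4) energy x1_norm L_cont that]) simp
    have "cst q (\<lambda>s. y (\<phi> s)) (\<lambda>s. (fst (\<alpha> (\<phi> s)), k * snd (\<alpha> (\<phi> s))))
        \<le> integral {t1..T} (\<lambda>r. L (y r) r) / k + k * (integral {t1..T} (\<lambda>r. (snd (\<alpha> r))\<^sup>2) / 2)
          + \<epsilon> * (T - q) + gT (y T)"
      unfolding \<phi>_def
      by (rule cost_rescaled_le[OF A t1(1) t1_T _ q(2) k_def shift[unfolded \<phi>_def]]) (use q t2 in simp)
    moreover have "integral {t1..T} (\<lambda>r. L (y r) r) / k + k * (integral {t1..T} (\<lambda>r. (snd (\<alpha> r))\<^sup>2) / 2)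
        \<le> integral {t1..T} (\<lambda>r. L (y r) r) + integral {t1..T} (\<lambda>r. (snd (\<alpha> r))\<^sup>2) / 2
          + 2 * h * (data_bound * T + E) / \<eta>"
      unfolding k_def
    proof (rule rescaling_excess_le[OF _ energy_nonneg[OF A] energy less_imp_le[OF q(4)]])
      have "\<bar>integral {t1..T} (\<lambda>r. L (y r) r)\<bar> \<le> data_bound * (T - t1)"
        using abs_integral_Lrun_le[OF A t1(1) less_imp_le[OF t1_T]] by simp
      also have "\<dots> \<le> data_bound * T" using data_bound_nonneg t1(1) by (simp add: mult_left_mono)
      finally show "\<bar>integral {t1..T} (\<lambda>r. L (y r) r)\<bar> \<le> data_bound * T" .
    qed (use h t1 q in auto)
    moreover have "\<epsilon> * (T - q) \<le> \<epsilon> * T" using \<epsilon> q t2 by (simp add: mult_left_mono)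
    ultimately show ?thesis
      using cost_concat[OF P R t2(1) _ q(2)] cost_eq_sum[OF A t1(1)] prefix q h
      by (simp add: algebra_simps add_divide_distrib)
  qed
  ultimately show ?thesis unfolding d_def by blast
qed

lemma value_fun_le_nearby:
  assumes \<epsilon>: "\<epsilon> > 0" and \<eta>: "\<eta> > 0"
  shows "\<exists>\<delta>>0. \<forall>x1\<in>G. \<forall>x2\<in>G. \<forall>t1\<in>{0..T - \<eta>}. \<forall>t2\<in>{0..T - \<eta>}.
           norm x1 \<le> R \<and> gdist N e x2 x1 < \<delta> \<and> \<bar>t1 - t2\<bar> < \<delta> \<longrightarrow> u x2 t2 \<le> u x1 t1 + \<epsilon>"
proof -
  define E where "E = 4 * data_bound * (T + 1) + 2"
  define \<epsilon>' where "\<epsilon>' = \<epsilon> / (4 * (T + 1))"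
  have \<epsilon>': "\<epsilon>' > 0" "\<epsilon>' * T \<le> \<epsilon> / 4"
    unfolding \<epsilon>'_def using \<epsilon> T_pos by (auto simp: field_simps)
  obtain \<rho> where \<rho>: "\<rho> > 0" and L_cont: "\<forall>z\<in>G. norm z \<le> R + (T + E) / 2 \<longrightarrow>
      (\<forall>s1\<in>{0..T}. \<forall>s2\<in>{0..T}. \<bar>s1 - s2\<bar> < \<rho> \<longrightarrow> \<bar>L z s1 - L z s2\<bar> \<le> \<epsilon>')"
    using Lrun_uniform_continuity_in_time[OF \<epsilon>'(1)] by blast
  define K where "K = data_bound + 2 * (data_bound * T + E) / \<eta>"
  have K: "0 \<le> K" unfolding K_def E_def using data_bound_nonneg T_pos \<eta> by simp
  define h where "h = min (min (\<eta> / 2) (\<rho> / 2)) (\<epsilon> / (4 * (K + 1)))"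
  have "h \<le> min (\<eta> / 2) (\<rho> / 2)" unfolding h_def by (rule min.cobounded1)
  then have h: "0 < h" "h \<le> \<eta> / 2" "2 * h \<le> \<rho>" unfolding h_def using \<eta> \<rho> \<epsilon> K by auto
  have "h \<le> \<epsilon> / (4 * (K + 1))" unfolding h_def by (rule min.cobounded2)
  then have "K * h \<le> K * (\<epsilon> / (4 * (K + 1)))" using K by (rule mult_left_mono)
  also have "\<dots> \<le> \<epsilon> / 4" using K \<epsilon> by (simp add: field_simps)
  finally have Kh: "K * h \<le> \<epsilon> / 4" .
  have L_cont_h: "\<forall>z\<in>G. norm z \<le> R + (T + E) / 2 \<longrightarrow>
      (\<forall>s1\<in>{0..T}. \<forall>s2\<in>{0..T}. \<bar>s1 - s2\<bar> < 2 * h \<longrightarrow> \<bar>L z s1 - L z s2\<bar> \<le> \<epsilon>')"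
  proof (intro ballI impI)
    fix z s1 s2 assume "z \<in> G" "norm z \<le> R + (T + E) / 2" "s1 \<in> {0..T}" "s2 \<in> {0..T}"
      and "\<bar>s1 - s2\<bar> < 2 * h"
    then show "\<bar>L z s1 - L z s2\<bar> \<le> \<epsilon>'" using L_cont h(3) by (meson less_le_trans)
  qed
  define \<delta> where "\<delta> = min (min h 1) (h * \<epsilon> / 8)"
  have "\<delta> > 0" unfolding \<delta>_def using h \<epsilon> by simp
  moreover have "u x2 t2 \<le> u x1 t1 + \<epsilon>"
    if x: "x1 \<in> G" "x2 \<in> G" and t: "t1 \<in> {0..T - \<eta>}" "t2 \<in> {0..T - \<eta>}"
      and close: "norm x1 \<le> R" "gdist N e x2 x1 < \<delta>" "\<bar>t1 - t2\<bar> < \<delta>" for x1 x2 t1 t2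
  proof -
    have t1: "0 \<le> t1" "t1 < T" using t \<eta> by auto
    have "0 < min 1 (\<epsilon> / 8)" using \<epsilon> by simp
    from value_fun_near_optimal[OF x(1) t1 this] obtain y \<alpha> where A: "admissible N e T t1 x1 y \<alpha>"
      and near: "cst t1 y \<alpha> < u x1 t1 + min 1 (\<epsilon> / 8)"
      by blast
    have energy: "integral {t1..T} (\<lambda>r. (snd (\<alpha> r))\<^sup>2) \<le> E"
      unfolding E_def using near_optimal_energy_le[OF x(1) t1 A] near by simp
    have times: "0 \<le> t1" "t1 \<le> T - \<eta>" "0 \<le> t2" "t2 \<le> T - \<eta>" "\<bar>t1 - t2\<bar> < h"
      using t close(3) unfolding \<delta>_def by auto
    obtain y' \<alpha>' where A': "admissible N e T t2 x2 y' \<alpha>'"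
      and cost': "cst t2 y' \<alpha>' \<le> cst t1 y \<alpha> + K * h + 2 * (gdist N e x2 x1)\<^sup>2 / h + \<epsilon>' * T"
      using transfer_cost_estimate[OF x times(1-4) h(1,2) times(5) A energy close(1) L_cont_h
          less_imp_le[OF \<epsilon>'(1)]]
      unfolding K_def by blast
    have "0 \<le> gdist N e x2 x1" using norm_diff_le_gdist[of x2 x1] norm_ge_zero order_trans by blast
    then have "(gdist N e x2 x1)\<^sup>2 \<le> gdist N e x2 x1"
      using close(2) unfolding \<delta>_def by (simp add: power2_eq_square mult_left_le)
    also have "\<dots> \<le> h * \<epsilon> / 8" using close(2) unfolding \<delta>_def by simp
    finally have "2 * (gdist N e x2 x1)\<^sup>2 / h \<le> \<epsilon> / 4" using h(1) by (simp add: field_simps)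
    moreover have "u x2 t2 \<le> cst t2 y' \<alpha>'" using value_fun_le_cost A' t \<eta> by simp
    ultimately show ?thesis using cost' near Kh \<epsilon>'(2) min.cobounded2[of 1 "\<epsilon> / 8"] \<epsilon> by linarith
  qed
  ultimately show ?thesis by blast
qed

end

theorem mainTheorem6:
  fixes N :: nat and e :: "nat \<Rightarrow> 'a::euclidean_space" and T :: real
    and l :: "nat \<Rightarrow> 'a \<Rightarrow> real \<Rightarrow> real" and ls :: "real \<Rightarrow> real"
    and g :: "nat \<Rightarrow> 'a \<Rightarrow> real" and gs :: real
  assumes N2: "N \<ge> 2"
    and unit: "\<forall>i\<in>{1..N}. norm (e i) = 1"
    and distinct: "inj_on e {1..N}"
    and Tpos: "T > 0"
    and l_cont: "\<forall>i\<in>{1..N}. continuous_on (J_edge (e i) \<times> {0..T}) (\<lambda>(x, t). l i x t)"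
    and l_bdd: "\<forall>i\<in>{1..N}. bounded ((\<lambda>(x, t). l i x t) ` (J_edge (e i) \<times> {0..T}))"
    and g_cont: "\<forall>i\<in>{1..N}. continuous_on (J_edge (e i)) (g i)"
    and g_bdd: "\<forall>i\<in>{1..N}. bounded (g i ` J_edge (e i))"
    and ls_cont: "continuous_on {0..T} ls"
    and ls_bdd: "bounded (ls ` {0..T})"
  shows "\<forall>x\<in>Graph N e. \<forall>t\<in>{0..<T}. \<forall>\<epsilon>>0. \<exists>\<delta>>0.
           \<forall>x'\<in>Graph N e. \<forall>t'\<in>{0..<T}.
             gdist N e x x' < \<delta> \<and> \<bar>t' - t\<bar> < \<delta> \<longrightarrow>
             \<bar>value_fun N e l ls g gs T x' t' - value_fun N e l ls g gs T x t\<bar> < \<epsilon>"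
proof (intro ballI allI impI)
  interpret star_graph_control N e T l ls g gs
    using N2 unit distinct Tpos l_cont l_bdd g_bdd ls_cont by unfold_locales auto
  fix x t and \<epsilon> :: real
  assume x: "x \<in> G" and t: "t \<in> {0..<T}" and \<epsilon>: "\<epsilon> > 0"
  define \<eta> where "\<eta> = (T - t) / 2"
  have \<eta>: "\<eta> > 0" unfolding \<eta>_def using t by simp
  obtain \<delta> where \<delta>: "\<delta> > 0" and near: "\<forall>x1\<in>G. \<forall>x2\<in>G. \<forall>t1\<in>{0..T - \<eta>}. \<forall>t2\<in>{0..T - \<eta>}.
      norm x1 \<le> norm x + 1 \<and> gdist N e x2 x1 < \<delta> \<and> \<bar>t1 - t2\<bar> < \<delta> \<longrightarrow> u x2 t2 \<le> u x1 t1 + \<epsilon> / 2"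
    using value_fun_le_nearby[of "\<epsilon> / 2" \<eta> "norm x + 1"] \<epsilon> \<eta> by auto
  show "\<exists>\<delta>>0. \<forall>x'\<in>G. \<forall>t'\<in>{0..<T}. gdist N e x x' < \<delta> \<and> \<bar>t' - t\<bar> < \<delta> \<longrightarrow> \<bar>u x' t' - u x t\<bar> < \<epsilon>"
  proof (intro exI[of _ "min (min \<delta> \<eta>) 1"] conjI ballI impI)
    fix x' t' assume x': "x' \<in> G" and t': "t' \<in> {0..<T}"
      and close: "gdist N e x x' < min (min \<delta> \<eta>) 1 \<and> \<bar>t' - t\<bar> < min (min \<delta> \<eta>) 1"
    have "T - \<eta> = t + \<eta>" unfolding \<eta>_def by (simp add: field_simps)
    then have times: "t \<in> {0..T - \<eta>}" "t' \<in> {0..T - \<eta>}"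
      using t t' close \<eta> by (auto simp: abs_less_iff)
    have "norm x' \<le> norm x + 1"
      using norm_diff_le_gdist[of x x'] close norm_triangle_ineq2[of x' x] by (simp add: norm_minus_commute)
    then show "\<bar>u x' t' - u x t\<bar> < \<epsilon>"
      using near[rule_format, OF x x' times] near[rule_format, OF x' x times(2,1)] close \<epsilon>
      by (simp add: gdist_commute abs_minus_commute)
  qed (use \<delta> \<eta> in simp)
qed

end
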